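(* Let $f:A\to B$ be a ring homomorphism, $\mathfrak b$ an ideal of $B$, and $A\bowtie^f\mathfrak b:=\{(a,f(a)+b): a\in A,\ b\in\mathfrak b\}\subseteq A\times B$. For a maximal ideal $\mathfrak m$ of $A$ let $S_{\mathfrak m}:=f(A\setminus\mathfrak m)+\mathfrak b$, $\mathfrak b_{S_{\mathfrak m}}:=\mathfrak bB_{S_{\mathfrak m}}$, and $f_{\mathfrak m}:A_{\mathfrak m}\to B_{S_{\mathfrak m}}$ the ring homomorphism induced by $f$ ($a/s\mapsto f(a)/f(s)$). Assume that for every maximal ideal $\mathfrak m$ of $A$ containing $f^{-1}(\mathfrak b)$, either $f_{\mathfrak m}$ is surjective or $f^{-1}(\mathfrak b)A_{\mathfrak m}\neq\{0\}$. Then the following are equivalent: (i) $A\bowtie^f\mathfrak b$ is an arithmetical ring; (ii) $A$ is an arithmetical ring, $\mathfrak b_{S_{\mathfrak m}}=\{0\}$ for every maximal ideal $\mathfrak m$ of $A$ containing $f^{-1}(\mathfrak b)$, and for every maximal ideal $\mathfrak n$ of $B$ not containing $\mathfrak b$ the set of all ideals of $B_{\mathfrak n}$ is totally ordered by inclusion.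
   Context: All rings are commutative with identity. $S_{\mathfrak m}$ is a multiplicative subset of $B$ and $B_{S_{\mathfrak m}}$ the localization (possibly zero). A ring is arithmetical if every finitely generated ideal is locally principal. *)

theory Defs
  imports "HOL-Algebra.Algebra"
begin

text \<open>Fractions x/s (x in R, s in S) modulo the usual relation
  x/s = y/t iff u(xt - ys) = 0 for some u in S.  The localization may be the zero ring.\<close>

definition loc_frac :: "('a, 'm) ring_scheme \<Rightarrow> 'a set \<Rightarrow> 'a \<Rightarrow> 'a \<Rightarrow> ('a \<times> 'a) set" where
  "loc_frac R S x s = {(y, t). y \<in> carrier R \<and> t \<in> S \<and>
      (\<exists>u\<in>S. u \<otimes>\<^bsub>R\<^esub> (a_minus R (x \<otimes>\<^bsub>R\<^esub> t) (y \<otimes>\<^bsub>R\<^esub> s)) = \<zero>\<^bsub>R\<^esub>)}"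

definition loc_rep :: "('a \<times> 'a) set \<Rightarrow> 'a \<times> 'a" where
  "loc_rep U = (SOME p. p \<in> U)"

definition localization :: "('a, 'm) ring_scheme \<Rightarrow> 'a set \<Rightarrow> (('a \<times> 'a) set) ring" where
  "localization R S =
     \<lparr> carrier = {loc_frac R S x s | x s. x \<in> carrier R \<and> s \<in> S},
       monoid.mult = (\<lambda>U V. loc_frac R S (fst (loc_rep U) \<otimes>\<^bsub>R\<^esub> fst (loc_rep V))
                                          (snd (loc_rep U) \<otimes>\<^bsub>R\<^esub> snd (loc_rep V))),
       one = loc_frac R S \<one>\<^bsub>R\<^esub> \<one>\<^bsub>R\<^esub>,
       ring.zero = loc_frac R S \<zero>\<^bsub>R\<^esub> \<one>\<^bsub>R\<^esub>,
       ring.add = (\<lambda>U V. loc_frac R S ((fst (loc_rep U) \<otimes>\<^bsub>R\<^esub> snd (loc_rep V)) \<oplus>\<^bsub>R\<^esub>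
                                   (fst (loc_rep V) \<otimes>\<^bsub>R\<^esub> snd (loc_rep U)))
                                  (snd (loc_rep U) \<otimes>\<^bsub>R\<^esub> snd (loc_rep V))) \<rparr>"

definition loc_can :: "('a, 'm) ring_scheme \<Rightarrow> 'a set \<Rightarrow> 'a \<Rightarrow> ('a \<times> 'a) set" where
  "loc_can R S x = loc_frac R S x \<one>\<^bsub>R\<^esub>"

definition loc_ext :: "('a, 'm) ring_scheme \<Rightarrow> 'a set \<Rightarrow> 'a set \<Rightarrow> (('a \<times> 'a) set) set" where
  "loc_ext R S I = genideal (localization R S) (loc_can R S ` I)"

abbreviation loc_at :: "('a, 'm) ring_scheme \<Rightarrow> 'a set \<Rightarrow> (('a \<times> 'a) set) ring" where
  "loc_at R P \<equiv> localization R (carrier R - P)"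

definition loc_map :: "('b, 'n) ring_scheme \<Rightarrow> 'b set \<Rightarrow> ('a \<Rightarrow> 'b) \<Rightarrow> ('a \<times> 'a) set \<Rightarrow> ('b \<times> 'b) set" where
  "loc_map B T f U = loc_frac B T (f (fst (loc_rep U))) (f (snd (loc_rep U)))"

definition fin_gen_ideal :: "'a set \<Rightarrow> ('a, 'm) ring_scheme \<Rightarrow> bool" where
  "fin_gen_ideal I R \<longleftrightarrow> ideal I R \<and> (\<exists>F. finite F \<and> F \<subseteq> carrier R \<and> I = genideal R F)"

definition locally_principal :: "'a set \<Rightarrow> ('a, 'm) ring_scheme \<Rightarrow> bool" where
  "locally_principal I R \<longleftrightarrow>
     (\<forall>M. maximalideal M R \<longrightarrow> principalideal (loc_ext R (carrier R - M) I) (loc_at R M))"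

definition arithmetical :: "('a, 'm) ring_scheme \<Rightarrow> bool" where
  "arithmetical R \<longleftrightarrow> cring R \<and> (\<forall>I. fin_gen_ideal I R \<longrightarrow> locally_principal I R)"

definition amalgamation :: "('a, 'm) ring_scheme \<Rightarrow> ('b, 'n) ring_scheme \<Rightarrow> ('a \<Rightarrow> 'b) \<Rightarrow> 'b set \<Rightarrow> ('a \<times> 'b) ring" where
  "amalgamation A B f J = (RDirProd A B)
     \<lparr> carrier := {(a, f a \<oplus>\<^bsub>B\<^esub> j) | a j. a \<in> carrier A \<and> j \<in> J} \<rparr>"

definition amal_S :: "('a, 'm) ring_scheme \<Rightarrow> ('b, 'n) ring_scheme \<Rightarrow> ('a \<Rightarrow> 'b) \<Rightarrow> 'b set \<Rightarrow> 'a set \<Rightarrow> 'b set" where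
  "amal_S A B f J M = {f s \<oplus>\<^bsub>B\<^esub> j | s j. s \<in> carrier A - M \<and> j \<in> J}"

end

theory Submission
  imports Defs
begin

text \<open>A commutative ring \<open>R\<close> is arithmetical iff for every maximal ideal \<open>\<mm>\<close> any
  \<open>a, b \<in> R\<close> satisfy \<open>s a = x b\<close> or \<open>s b = x a\<close> for some \<open>s \<notin> \<mm>\<close>: one direction because
  \<open>R\<^sub>\<mm>\<close> is local, so a principal ideal \<open>(a, b)\<close> is generated by \<open>a\<close> or by \<open>b\<close>; the other
  because then a finitely generated ideal of \<open>R\<^sub>\<mm>\<close> is generated by one of its generators.

  The maximal ideals of \<open>D = A \<bowtie>\<^sup>f \<bb>\<close> are the preimages of the maximal ideals \<open>\<mm>\<close> of \<open>A\<close>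
  under the first projection and those of the maximal ideals \<open>\<nn> \<not>\<supseteq> \<bb>\<close> of \<open>B\<close> under the
  second one. At the latter, multiplying by \<open>(0, j)\<close> with \<open>j \<in> \<bb> - \<nn>\<close> turns the condition
  for \<open>D\<close> into the one for \<open>B\<close> at \<open>\<nn>\<close>. At the former, the condition for \<open>D\<close> implies the one
  for \<open>A\<close> at \<open>\<mm>\<close>, with equivalence when some \<open>c \<notin> \<mm>\<close> has \<open>f c \<in> \<bb>\<close> (multiply by
  \<open>(c, 0)\<close>). When \<open>f\<inverse>(\<bb>) \<subseteq> \<mm>\<close>, the condition for \<open>D\<close> amounts to the one for \<open>A\<close> together
  with \<open>\<bb>\<close> being killed by \<open>S\<^sub>\<mm>\<close>: comparing \<open>(0, j)\<close> with \<open>(e, 0)\<close> for \<open>e \<in> f\<inverse>(\<bb>)\<close>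
  kills \<open>j\<close> or \<open>e\<close>, and the hypothesis on \<open>f\<^sub>\<mm>\<close> provides an \<open>e\<close> for which this forces
  \<open>j\<close> to be killed.\<close>

section \<open>Ideals of commutative rings\<close>

lemma (in cring) ideal_commI:
  assumes sub: "I \<subseteq> carrier R" and zero: "\<zero> \<in> I"
    and add: "\<And>x y. x \<in> I \<Longrightarrow> y \<in> I \<Longrightarrow> x \<oplus> y \<in> I"
    and mult: "\<And>x r. x \<in> I \<Longrightarrow> r \<in> carrier R \<Longrightarrow> r \<otimes> x \<in> I"
  shows "ideal I R"
proof (rule idealI)
  show "subgroup I (add_monoid R)"
  proof (rule subgroup.intro)
    fix x assume x: "x \<in> I"
    then have "(\<ominus> \<one>) \<otimes> x \<in> I" using mult by simp
    then show "inv\<^bsub>add_monoid R\<^esub> x \<in> I"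
      using x sub by (simp add: l_minus a_inv_def[symmetric] subsetD)
  qed (use sub zero add in auto)
next
  fix a x assume "a \<in> I" "x \<in> carrier R"
  then show "a \<otimes> x \<in> I" using mult sub m_comm by (metis subsetD)
qed (use mult ring_axioms in auto)

lemma (in ring) maximalideal_eq_of_subset:
  assumes "maximalideal P R" "ideal Q R" "P \<subseteq> Q" "Q \<noteq> carrier R"
  shows "Q = P"
  using maximalideal.I_maximal[OF assms(1-3)] ideal.Icarr[OF assms(2)] assms(4) by blast

lemma (in cring) ideal_Union_chain:
  assumes C: "C \<noteq> {}" and ideals: "\<And>K. K \<in> C \<Longrightarrow> ideal K R"
    and total: "\<And>K K'. K \<in> C \<Longrightarrow> K' \<in> C \<Longrightarrow> K \<subseteq> K' \<or> K' \<subseteq> K"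
  shows "ideal (\<Union>C) R"
proof (rule ideal_commI)
  show "\<Union>C \<subseteq> carrier R"
  proof
    fix x assume "x \<in> \<Union>C"
    then obtain K where "K \<in> C" "x \<in> K" by blast
    then show "x \<in> carrier R" using ideal.Icarr[OF ideals] by blast
  qed
  obtain K0 where K0: "K0 \<in> C" using C by blast
  have "\<zero> \<in> K0" using additive_subgroup.zero_closed[OF ideal.axioms(1)[OF ideals[OF K0]]] .
  then show "\<zero> \<in> \<Union>C" using K0 by blast
next
  fix x y assume "x \<in> \<Union>C" "y \<in> \<Union>C"
  then obtain K K' where KK: "K \<in> C" "K' \<in> C" "x \<in> K" "y \<in> K'" by blast
  from total[OF KK(1,2)] show "x \<oplus> y \<in> \<Union>C"
  proof
    assume "K \<subseteq> K'"
    then have "x \<oplus> y \<in> K'"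
      using KK additive_subgroup.a_closed[OF ideal.axioms(1)[OF ideals[OF KK(2)]]] by blast
    then show ?thesis using KK by blast
  next
    assume "K' \<subseteq> K"
    then have "x \<oplus> y \<in> K"
      using KK additive_subgroup.a_closed[OF ideal.axioms(1)[OF ideals[OF KK(1)]]] by blast
    then show ?thesis using KK by blast
  qed
next
  fix x r assume "x \<in> \<Union>C" "r \<in> carrier R"
  then obtain K where K: "K \<in> C" "x \<in> K" "r \<in> carrier R" by blast
  then have "r \<otimes> x \<in> K" using ideal.I_l_closed[OF ideals[OF K(1)] K(2) K(3)] by blast
  then show "r \<otimes> x \<in> \<Union>C" using K by blast
qed

lemma (in cring) ex_maximalideal:
  assumes I: "ideal I R" and one: "\<one> \<notin> I"
  shows "\<exists>M. maximalideal M R \<and> I \<subseteq> M"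
proof -
  define Proper where "Proper = {K. ideal K R \<and> I \<subseteq> K \<and> \<one> \<notin> K}"
  have "\<exists>M\<in>Proper. \<forall>K\<in>Proper. M \<subseteq> K \<longrightarrow> K = M"
  proof (rule subset_Zorn)
    fix C assume C: "subset.chain Proper C"
    show "\<exists>U\<in>Proper. \<forall>K\<in>C. K \<subseteq> U"
    proof (cases "C = {}")
      case True
      then show ?thesis using I one unfolding Proper_def by blast
    next
      case False
      have CP: "C \<subseteq> Proper" and total: "\<And>K K'. K \<in> C \<Longrightarrow> K' \<in> C \<Longrightarrow> K \<subseteq> K' \<or> K' \<subseteq> K"
        using C unfolding subset_chain_def by auto
      have "ideal (\<Union>C) R"
        using ideal_Union_chain[OF False _ total] CP unfolding Proper_def by blast
      moreover have "I \<subseteq> \<Union>C" using False CP unfolding Proper_def by blast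
      moreover have "\<one> \<notin> \<Union>C" using CP unfolding Proper_def by blast
      ultimately have "\<Union>C \<in> Proper" unfolding Proper_def by blast
      then show ?thesis by blast
    qed
  qed
  then obtain M where M: "M \<in> Proper" "\<And>K. K \<in> Proper \<Longrightarrow> M \<subseteq> K \<Longrightarrow> K = M" by blast
  have MI: "ideal M R" "I \<subseteq> M" "\<one> \<notin> M" using M(1) unfolding Proper_def by auto
  have "maximalideal M R"
  proof (rule maximalidealI[OF MI(1)])
    show "carrier R \<noteq> M" using MI(3) by blast
    fix K assume K: "ideal K R" "M \<subseteq> K" "K \<subseteq> carrier R"
    show "K = M \<or> K = carrier R"
    proof (cases "\<one> \<in> K")
      case True
      then show ?thesis using ideal.one_imp_carrier[OF K(1)] by blast
    next
      case False
      then have "K \<in> Proper" unfolding Proper_def using K MI by blast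
      then show ?thesis using M(2) K by blast
    qed
  qed
  then show ?thesis using MI by blast
qed

lemma (in cring) maximalideal_invertible_mod:
  assumes M: "maximalideal M R" and x: "x \<in> carrier R" "x \<notin> M"
  shows "\<exists>y\<in>carrier R. \<exists>n\<in>M. \<one> = y \<otimes> x \<oplus> n"
proof -
  have MI: "ideal M R" using M maximalideal.axioms(1) by blast
  let ?K = "PIdl x <+>\<^bsub>R\<^esub> M"
  have K: "ideal ?K R" using add_ideals[OF cgenideal_ideal[OF x(1)] MI] .
  have "\<zero> \<in> PIdl x" unfolding cgenideal_def using x(1) by (force intro!: exI[of _ \<zero>])
  then have "M \<subseteq> ?K"
  proof -
    have "m = \<zero> \<oplus> m" if "m \<in> M" for m using that ideal.Icarr[OF MI] by simp
    then show ?thesis using \<open>\<zero> \<in> PIdl x\<close> unfolding set_add_def' by blast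
  qed
  moreover have "x \<in> ?K"
  proof -
    have "x = x \<oplus> \<zero>" using x(1) by simp
    then show ?thesis using cgenideal_self[OF x(1)] additive_subgroup.zero_closed[OF ideal.axioms(1)[OF MI]]
      unfolding set_add_def' by blast
  qed
  ultimately have "?K = carrier R"
    using maximalideal.I_maximal[OF M K] ideal.Icarr[OF K] x(2) by blast
  then show ?thesis using one_closed unfolding set_add_def' cgenideal_def by blast
qed

lemma (in cring) cgenideal_zero_mem:
  "a \<in> carrier R \<Longrightarrow> \<zero> \<in> PIdl a"
  using additive_subgroup.zero_closed[OF ideal.axioms(1)[OF cgenideal_ideal]] by blast

lemma (in cring) genideal_pair_subset:
  assumes p: "p \<in> carrier R" and q: "q \<in> carrier R"
  shows "Idl {p, q} \<subseteq> PIdl p <+>\<^bsub>R\<^esub> PIdl q"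
proof (rule genideal_minimal[OF add_ideals[OF cgenideal_ideal[OF p] cgenideal_ideal[OF q]]])
  have "p = p \<oplus> \<zero>" "q = \<zero> \<oplus> q" using p q by simp_all
  then show "{p, q} \<subseteq> PIdl p <+>\<^bsub>R\<^esub> PIdl q"
    using cgenideal_self[OF p] cgenideal_self[OF q] cgenideal_zero_mem[OF p] cgenideal_zero_mem[OF q]
    unfolding set_add_def' by blast
qed

lemma (in cring) genideal_pair_eq_cgenideal:
  assumes a: "a \<in> carrier R" and b: "b \<in> PIdl a"
  shows "Idl {a, b} = PIdl a"
proof
  have "b \<in> carrier R" using ideal.Icarr[OF cgenideal_ideal[OF a] b] .
  then show "PIdl a \<subseteq> Idl {a, b}"
    unfolding cgenideal_eq_genideal[OF a] using a by (intro subset_Idl_subset) auto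
  show "Idl {a, b} \<subseteq> PIdl a"
    by (rule genideal_minimal[OF cgenideal_ideal[OF a]]) (use cgenideal_self[OF a] b in simp)
qed

lemma (in cring) genideal_empty: "Idl {} = PIdl \<zero>"
proof -
  have "Idl {} \<subseteq> {\<zero>}" by (rule genideal_minimal[OF zeroideal]) simp
  moreover have "\<zero> \<in> Idl {}"
    using additive_subgroup.zero_closed[OF ideal.axioms(1)[OF genideal_ideal[of "{}"]]] by simp
  ultimately show ?thesis using genideal_zero cgenideal_eq_genideal[of \<zero>] by auto
qed

lemma (in cring) genideal_insert_principal:
  assumes a: "a \<in> carrier R" and G: "G \<subseteq> carrier R" and w: "w \<in> carrier R" "Idl G = PIdl w"
  shows "Idl (insert a G) = Idl {a, w}"
proof
  have "w \<in> Idl (insert a G)"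
    using cgenideal_self[OF w(1)] w(2) subset_Idl_subset[of "insert a G" G] a G by auto
  moreover have "a \<in> Idl (insert a G)" using genideal_self[of "insert a G"] a G by auto
  ultimately show "Idl {a, w} \<subseteq> Idl (insert a G)"
    by (intro genideal_minimal[OF genideal_ideal]) (use a G in auto)
  have "Idl {a, w} \<supseteq> PIdl w"
    by (intro cgenideal_minimal[OF genideal_ideal]) (use genideal_self[of "{a, w}"] a w in auto)
  then have "G \<subseteq> Idl {a, w}" using genideal_self[OF G] w(2) by blast
  then show "Idl (insert a G) \<subseteq> Idl {a, w}"
    by (intro genideal_minimal[OF genideal_ideal]) (use genideal_self[of "{a, w}"] a w in auto)
qed

lemma (in cring) finite_genideal_principal:
  assumes total: "\<And>a b. a \<in> carrier R \<Longrightarrow> b \<in> carrier R \<Longrightarrow> a \<in> PIdl b \<or> b \<in> PIdl a"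
    and "finite G" "G \<subseteq> carrier R"
  shows "\<exists>w\<in>carrier R. Idl G = PIdl w"
  using assms(2,3)
proof (induction G rule: finite_induct)
  case empty
  then show ?case using genideal_empty by blast
next
  case (insert a G)
  then obtain w where w: "w \<in> carrier R" "Idl G = PIdl w" by auto
  have a: "a \<in> carrier R" and G: "G \<subseteq> carrier R" using insert.prems by auto
  have "Idl (insert a G) = Idl {a, w}" using genideal_insert_principal[OF a G w] .
  moreover from total[OF a w(1)] have "Idl {a, w} = PIdl a \<or> Idl {a, w} = PIdl w"
  proof
    assume "a \<in> PIdl w"
    then have "Idl {w, a} = PIdl w" by (rule genideal_pair_eq_cgenideal[OF w(1)])
    then show ?thesis by (simp add: insert_commute)
  qed (use genideal_pair_eq_cgenideal[OF a] in blast)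
  ultimately show ?case using a w(1) by auto
qed

lemma (in cring) ideals_chain_iff_divisibility_chain:
  "(\<forall>I J. ideal I R \<and> ideal J R \<longrightarrow> I \<subseteq> J \<or> J \<subseteq> I) \<longleftrightarrow>
   (\<forall>a\<in>carrier R. \<forall>b\<in>carrier R. a \<in> PIdl b \<or> b \<in> PIdl a)"
proof (intro iffI ballI allI impI)
  fix a b assume total: "\<forall>I J. ideal I R \<and> ideal J R \<longrightarrow> I \<subseteq> J \<or> J \<subseteq> I"
    and ab: "a \<in> carrier R" "b \<in> carrier R"
  have "PIdl a \<subseteq> PIdl b \<or> PIdl b \<subseteq> PIdl a"
    using total[rule_format, OF conjI[OF cgenideal_ideal[OF ab(1)] cgenideal_ideal[OF ab(2)]]] .
  then show "a \<in> PIdl b \<or> b \<in> PIdl a" using cgenideal_self[OF ab(1)] cgenideal_self[OF ab(2)] by blast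
next
  fix I J
  assume total: "\<forall>a\<in>carrier R. \<forall>b\<in>carrier R. a \<in> PIdl b \<or> b \<in> PIdl a"
    and ideals: "ideal I R \<and> ideal J R"
  show "I \<subseteq> J \<or> J \<subseteq> I"
  proof (rule ccontr)
    assume "\<not> (I \<subseteq> J \<or> J \<subseteq> I)"
    then obtain x y where xy: "x \<in> I" "x \<notin> J" "y \<in> J" "y \<notin> I" by blast
    have I: "ideal I R" and J: "ideal J R" using ideals by auto
    have "x \<in> PIdl y \<or> y \<in> PIdl x"
      using total ideal.Icarr[OF I xy(1)] ideal.Icarr[OF J xy(3)] by blast
    then show False using cgenideal_minimal[OF J xy(3)] cgenideal_minimal[OF I xy(1)] xy by blast
  qed
qed

lemma (in cring) cgenideal_unit_multiple:
  assumes u: "u \<in> Units R" and w: "w \<in> carrier R" and v: "v \<in> carrier R"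
  shows "v \<otimes> w \<in> PIdl (u \<otimes> w)"
proof -
  have uc: "u \<in> carrier R" "inv u \<in> carrier R" using u by auto
  have "(v \<otimes> inv u) \<otimes> (u \<otimes> w) = v \<otimes> ((inv u \<otimes> u) \<otimes> w)" using uc v w by (simp add: m_assoc)
  then have "v \<otimes> w = (v \<otimes> inv u) \<otimes> (u \<otimes> w)" using u v w by simp
  then show ?thesis using uc v unfolding cgenideal_def by blast
qed

text \<open>The hypothesis \<open>nonunits_add\<close> says that \<open>R\<close> is local.\<close>

lemma (in cring) eq_zero_if_fixed_by_nonunit:
  assumes nonunits_add: "\<And>u v. u \<in> carrier R \<Longrightarrow> v \<in> carrier R \<Longrightarrow> u \<notin> Units R \<Longrightarrow>
      v \<notin> Units R \<Longrightarrow> u \<oplus> v \<notin> Units R"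
    and e: "e \<in> carrier R" "e \<notin> Units R" and w: "w \<in> carrier R" "w = e \<otimes> w"
  shows "w = \<zero>"
proof -
  have "e \<oplus> (\<one> \<ominus> e) = \<one>" using e by algebra
  moreover have "\<one> \<ominus> e \<in> carrier R" using e by simp
  ultimately have u: "\<one> \<ominus> e \<in> Units R"
    using nonunits_add[OF e(1) _ e(2)] Units_one_closed by metis
  have "(\<one> \<ominus> e) \<otimes> w = w \<ominus> e \<otimes> w" using e w(1) by algebra
  also have "\<dots> = \<zero>" using w by simp
  finally have "inv (\<one> \<ominus> e) \<otimes> ((\<one> \<ominus> e) \<otimes> w) = \<zero>" using u by simp
  moreover have "inv (\<one> \<ominus> e) \<otimes> ((\<one> \<ominus> e) \<otimes> w) = w"
    using u w(1) Units_closed[OF u] Units_closed[OF Units_inv_Units[OF u]]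
    by (simp add: m_assoc[symmetric])
  ultimately show ?thesis by simp
qed

lemma (in cring) principal_pair_comparable:
  assumes nonunits_add: "\<And>u v. u \<in> carrier R \<Longrightarrow> v \<in> carrier R \<Longrightarrow> u \<notin> Units R \<Longrightarrow>
      v \<notin> Units R \<Longrightarrow> u \<oplus> v \<notin> Units R"
    and ab: "a \<in> carrier R" "b \<in> carrier R" and w: "w \<in> carrier R" "Idl {a, b} = PIdl w"
  shows "a \<in> PIdl b \<or> b \<in> PIdl a"
proof -
  have "{a, b} \<subseteq> Idl {a, b}" by (rule genideal_self) (use ab in auto)
  then have "a \<in> PIdl w" "b \<in> PIdl w" using w(2) by auto
  then obtain g h where gh: "g \<in> carrier R" "a = g \<otimes> w" "h \<in> carrier R" "b = h \<otimes> w"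
    unfolding cgenideal_def by blast
  have "w \<in> PIdl a <+>\<^bsub>R\<^esub> PIdl b"
    using w(2) genideal_pair_subset[OF ab] cgenideal_self[OF w(1)] by auto
  then obtain x y where xy: "x \<in> carrier R" "y \<in> carrier R" "w = x \<otimes> a \<oplus> y \<otimes> b"
    unfolding set_add_def' cgenideal_def by blast
  define e where "e = x \<otimes> g \<oplus> y \<otimes> h"
  have e: "e \<in> carrier R" unfolding e_def using xy gh by simp
  have "w = x \<otimes> (g \<otimes> w) \<oplus> y \<otimes> (h \<otimes> w)" using xy(3) gh(2,4) by simp
  also have "\<dots> = e \<otimes> w" unfolding e_def using xy gh w(1) by algebra
  finally have we: "w = e \<otimes> w" .
  show ?thesis
  proof (cases "e \<in> Units R")
    case True
    then have "x \<otimes> g \<in> Units R \<or> y \<otimes> h \<in> Units R"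
      using nonunits_add[of "x \<otimes> g" "y \<otimes> h"] xy gh e_def by blast
    then have "g \<in> Units R \<or> h \<in> Units R"
      using unit_factor[of g x] unit_factor[of h y] xy gh m_comm by metis
    then show ?thesis using cgenideal_unit_multiple gh w(1) by blast
  next
    case False
    then have "a = \<zero> \<otimes> b"
      using eq_zero_if_fixed_by_nonunit[OF nonunits_add e False w(1) we] gh ab by simp
    then show ?thesis unfolding cgenideal_def by blast
  qed
qed

lemma (in cring) maximalideal_complement_mult:
  "maximalideal M R \<Longrightarrow> x \<in> carrier R - M \<Longrightarrow> y \<in> carrier R - M \<Longrightarrow> x \<otimes> y \<in> carrier R - M"
  using primeideal.I_prime[OF maximalideal_prime] by blast

text \<open>Write \<open>1 = y h(q) + n\<close> and \<open>1 = z e + n'\<close> with \<open>n, n' \<in> M\<close>. The element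
  \<open>w = q r\<^sub>1 + r\<^sub>2\<close> with \<open>h r\<^sub>1 = y z e\<close>, \<open>h r\<^sub>2 = n z e\<close> lies in \<open>Q\<close> and maps to \<open>z e\<close>,
  so \<open>1 - w\<close> maps to \<open>n'\<close>.\<close>

lemma (in ring_hom_ring) vimage_maximalideal_one_mem:
  assumes S: "cring S" and M: "maximalideal M S" and e: "e \<in> carrier S" "e \<notin> M"
    and img: "\<And>s. s \<in> carrier S \<Longrightarrow> \<exists>r\<in>carrier R. h r = s \<otimes>\<^bsub>S\<^esub> e"
    and Q: "ideal Q R" "{r \<in> carrier R. h r \<in> M} \<subseteq> Q" and q: "q \<in> Q" "h q \<notin> M"
  shows "\<one> \<in> Q"
proof -
  interpret S: cring S by (rule S)
  have MI: "ideal M S" using M maximalideal.axioms(1) by blast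
  have qc: "q \<in> carrier R" using ideal.Icarr[OF Q(1) q(1)] .
  obtain y n where yn: "y \<in> carrier S" "n \<in> M" "\<one>\<^bsub>S\<^esub> = y \<otimes>\<^bsub>S\<^esub> h q \<oplus>\<^bsub>S\<^esub> n"
    using S.maximalideal_invertible_mod[OF M hom_closed[OF qc] q(2)] by blast
  obtain z n' where zn: "z \<in> carrier S" "n' \<in> M" "\<one>\<^bsub>S\<^esub> = z \<otimes>\<^bsub>S\<^esub> e \<oplus>\<^bsub>S\<^esub> n'"
    using S.maximalideal_invertible_mod[OF M e] by blast
  have nc: "n \<in> carrier S" "n' \<in> carrier S" using yn zn ideal.Icarr[OF MI] by auto
  obtain r1 where r1: "r1 \<in> carrier R" "h r1 = (y \<otimes>\<^bsub>S\<^esub> z) \<otimes>\<^bsub>S\<^esub> e"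
    using img yn zn by (meson S.m_closed)
  obtain r2 where r2: "r2 \<in> carrier R" "h r2 = (n \<otimes>\<^bsub>S\<^esub> z) \<otimes>\<^bsub>S\<^esub> e"
    using img nc zn by (meson S.m_closed)
  let ?w = "q \<otimes> r1 \<oplus> r2"
  have "r2 \<in> {r \<in> carrier R. h r \<in> M}" using r2 ideal.I_r_closed[OF MI] yn zn e by (simp add: S.m_assoc)
  then have "r2 \<in> Q" using Q(2) by blast
  then have w: "?w \<in> Q"
    using ideal.I_r_closed[OF Q(1) q(1) r1(1)] additive_subgroup.a_closed[OF ideal.axioms(1)[OF Q(1)]]
    by blast
  have wc: "?w \<in> carrier R" using qc r1 r2 by simp
  have "h ?w = h q \<otimes>\<^bsub>S\<^esub> ((y \<otimes>\<^bsub>S\<^esub> z) \<otimes>\<^bsub>S\<^esub> e) \<oplus>\<^bsub>S\<^esub> (n \<otimes>\<^bsub>S\<^esub> z) \<otimes>\<^bsub>S\<^esub> e"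
    using qc r1 r2 by simp
  also have "\<dots> = (y \<otimes>\<^bsub>S\<^esub> h q \<oplus>\<^bsub>S\<^esub> n) \<otimes>\<^bsub>S\<^esub> (z \<otimes>\<^bsub>S\<^esub> e)"
    using hom_closed[OF qc] yn(1) nc(1) zn(1) e(1) by algebra
  also have "\<dots> = z \<otimes>\<^bsub>S\<^esub> e"
    by (simp only: yn(3)[symmetric]) (use zn(1) e(1) in simp)
  finally have "h (\<one> \<ominus> ?w) = \<one>\<^bsub>S\<^esub> \<ominus>\<^bsub>S\<^esub> z \<otimes>\<^bsub>S\<^esub> e"
    using wc by (simp add: a_minus_def)
  also have "\<dots> = (z \<otimes>\<^bsub>S\<^esub> e \<oplus>\<^bsub>S\<^esub> n') \<ominus>\<^bsub>S\<^esub> z \<otimes>\<^bsub>S\<^esub> e" using zn(3) by simp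
  also have "\<dots> = n'" using zn e nc by algebra
  finally have "\<one> \<ominus> ?w \<in> Q" using zn(2) wc Q(2) by auto
  then have "(\<one> \<ominus> ?w) \<oplus> ?w \<in> Q"
    using w additive_subgroup.a_closed[OF ideal.axioms(1)[OF Q(1)]] by blast
  moreover have "(\<one> \<ominus> ?w) \<oplus> ?w = \<one>" using wc by algebra
  ultimately show ?thesis by simp
qed

lemma (in ring_hom_ring) maximalideal_vimage:
  assumes S: "cring S" and M: "maximalideal M S" and e: "e \<in> carrier S" "e \<notin> M"
    and img: "\<And>s. s \<in> carrier S \<Longrightarrow> \<exists>r\<in>carrier R. h r = s \<otimes>\<^bsub>S\<^esub> e"
  shows "maximalideal {r \<in> carrier R. h r \<in> M} R"
proof -
  have MI: "ideal M S" using M maximalideal.axioms(1) by blast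
  let ?P = "{r \<in> carrier R. h r \<in> M}"
  show ?thesis
  proof (rule maximalidealI[OF ideal_vimage[OF MI]])
    have "\<one>\<^bsub>S\<^esub> \<notin> M" using ideal.one_imp_carrier[OF MI] maximalideal.I_notcarr[OF M] by blast
    then have "\<one> \<notin> ?P" by simp
    then show "carrier R \<noteq> ?P" using R.one_closed by blast
    fix Q assume Q: "ideal Q R" "?P \<subseteq> Q" "Q \<subseteq> carrier R"
    show "Q = ?P \<or> Q = carrier R"
    proof (cases "Q = ?P")
      case False
      then have "\<not> Q \<subseteq> ?P" using subset_antisym[OF _ Q(2)] by blast
      then obtain q where "q \<in> Q" "q \<notin> ?P" unfolding subset_eq by blast
      moreover have "q \<in> carrier R" using \<open>q \<in> Q\<close> Q(3) by (rule subsetD[rotated])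
      ultimately have "\<one> \<in> Q" using vimage_maximalideal_one_mem[OF S M e img Q(1,2)] by simp
      then show ?thesis using ideal.one_imp_carrier[OF Q(1)] by simp
    qed simp
  qed
qed

section \<open>Localization\<close>

locale mult_subset = cring R for R (structure) + fixes S
  assumes S_subset: "S \<subseteq> carrier R" and one_S: "\<one> \<in> S"
    and S_mult: "s \<in> S \<Longrightarrow> t \<in> S \<Longrightarrow> s \<otimes> t \<in> S"
begin

abbreviation "fr \<equiv> loc_frac R S"
abbreviation "L \<equiv> localization R S"

lemma S_carrier: "s \<in> S \<Longrightarrow> s \<in> carrier R"
  using S_subset by auto

lemma loc_frac_mem_iff:
  "(y, t) \<in> fr x s \<longleftrightarrow> y \<in> carrier R \<and> t \<in> S \<and> (\<exists>u\<in>S. u \<otimes> (x \<otimes> t \<ominus> y \<otimes> s) = \<zero>)"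
  unfolding loc_frac_def by simp

lemma loc_frac_refl: "x \<in> carrier R \<Longrightarrow> s \<in> S \<Longrightarrow> (x, s) \<in> fr x s"
  unfolding loc_frac_mem_iff using one_S S_carrier by (auto intro!: bexI[of _ \<one>])

lemma loc_frac_sym:
  assumes "(y, t) \<in> fr x s" "x \<in> carrier R" "s \<in> S"
  shows "(x, s) \<in> fr y t"
proof -
  obtain u where u: "u \<in> S" "u \<otimes> (x \<otimes> t \<ominus> y \<otimes> s) = \<zero>" "y \<in> carrier R" "t \<in> S"
    using assms(1) unfolding loc_frac_mem_iff by auto
  have "u \<in> carrier R" "s \<in> carrier R" "t \<in> carrier R" using u assms S_carrier by auto
  then have "u \<otimes> (y \<otimes> s \<ominus> x \<otimes> t) = \<ominus> (u \<otimes> (x \<otimes> t \<ominus> y \<otimes> s))"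
    using u(3) assms(2) by algebra
  then show ?thesis unfolding loc_frac_mem_iff using u assms by auto
qed

lemma loc_frac_trans:
  assumes "(b, d) \<in> fr a p" "(z, r) \<in> fr b d" "a \<in> carrier R" "p \<in> S"
  shows "(z, r) \<in> fr a p"
proof -
  obtain v where v: "v \<in> S" "v \<otimes> (a \<otimes> d \<ominus> b \<otimes> p) = \<zero>" "b \<in> carrier R" "d \<in> S"
    using assms(1) unfolding loc_frac_mem_iff by auto
  obtain w where w: "w \<in> S" "w \<otimes> (b \<otimes> r \<ominus> z \<otimes> d) = \<zero>" "z \<in> carrier R" "r \<in> S"
    using assms(2) unfolding loc_frac_mem_iff by auto
  have c: "v \<in> carrier R" "w \<in> carrier R" "d \<in> carrier R" "r \<in> carrier R" "p \<in> carrier R"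
    using v w assms S_carrier by auto
  have "(v \<otimes> w \<otimes> d) \<otimes> (a \<otimes> r \<ominus> z \<otimes> p) =
        (w \<otimes> r) \<otimes> (v \<otimes> (a \<otimes> d \<ominus> b \<otimes> p)) \<oplus> (v \<otimes> p) \<otimes> (w \<otimes> (b \<otimes> r \<ominus> z \<otimes> d))"
    using c assms(3) v(3) w(3) by algebra
  also have "\<dots> = \<zero>" using v w c by simp
  finally show ?thesis unfolding loc_frac_mem_iff using v w S_mult by auto
qed

lemma loc_frac_eq_iff:
  assumes "x \<in> carrier R" "s \<in> S" "y \<in> carrier R" "t \<in> S"
  shows "fr x s = fr y t \<longleftrightarrow> (\<exists>u\<in>S. u \<otimes> (x \<otimes> t \<ominus> y \<otimes> s) = \<zero>)"
proof
  assume "fr x s = fr y t"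
  then have "(y, t) \<in> fr x s" using loc_frac_refl assms by auto
  then show "\<exists>u\<in>S. u \<otimes> (x \<otimes> t \<ominus> y \<otimes> s) = \<zero>" unfolding loc_frac_mem_iff by auto
next
  assume "\<exists>u\<in>S. u \<otimes> (x \<otimes> t \<ominus> y \<otimes> s) = \<zero>"
  then have yt: "(y, t) \<in> fr x s" unfolding loc_frac_mem_iff using assms by auto
  then have xs: "(x, s) \<in> fr y t" using loc_frac_sym assms by blast
  show "fr x s = fr y t"
    using loc_frac_trans[OF yt] loc_frac_trans[OF xs] assms by auto
qed

lemma loc_frac_eqI:
  assumes "x \<in> carrier R" "s \<in> S" "y \<in> carrier R" "t \<in> S" "u \<in> S"
    "u \<otimes> (x \<otimes> t \<ominus> y \<otimes> s) = \<zero>"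
  shows "fr x s = fr y t"
  using loc_frac_eq_iff assms by blast

lemma loc_frac_cross_eqI:
  assumes "x \<in> carrier R" "s \<in> S" "y \<in> carrier R" "t \<in> S" "x \<otimes> t = y \<otimes> s"
  shows "fr x s = fr y t"
  by (rule loc_frac_eqI[OF assms(1-4) one_S]) (use assms S_carrier in simp)

lemma loc_rep_props:
  assumes "x \<in> carrier R" "s \<in> S"
  shows "fst (loc_rep (fr x s)) \<in> carrier R" "snd (loc_rep (fr x s)) \<in> S"
    "fr (fst (loc_rep (fr x s))) (snd (loc_rep (fr x s))) = fr x s"
proof -
  obtain y t where yt: "loc_rep (fr x s) = (y, t)" by fastforce
  have "(y, t) \<in> fr x s"
    using someI[of "\<lambda>p. p \<in> fr x s", OF loc_frac_refl[OF assms]] yt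
    unfolding loc_rep_def by simp
  then show "fst (loc_rep (fr x s)) \<in> carrier R" "snd (loc_rep (fr x s)) \<in> S"
    "fr (fst (loc_rep (fr x s))) (snd (loc_rep (fr x s))) = fr x s"
    using yt loc_frac_eq_iff[OF assms] unfolding loc_frac_mem_iff by auto
qed

lemma localization_carrier: "carrier L = {fr x s | x s. x \<in> carrier R \<and> s \<in> S}"
  unfolding localization_def by simp

lemma loc_frac_closed: "x \<in> carrier R \<Longrightarrow> s \<in> S \<Longrightarrow> fr x s \<in> carrier L"
  unfolding localization_carrier by auto

lemma localization_cases:
  assumes "U \<in> carrier L"
  obtains x s where "x \<in> carrier R" "s \<in> S" "U = fr x s"
  using assms unfolding localization_carrier by auto

lemma localization_zero: "\<zero>\<^bsub>L\<^esub> = fr \<zero> \<one>"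
  unfolding localization_def by simp

lemma localization_one: "\<one>\<^bsub>L\<^esub> = fr \<one> \<one>"
  unfolding localization_def by simp

lemma loc_frac_mult_cong:
  assumes c: "x \<in> carrier R" "s \<in> S" "y \<in> carrier R" "t \<in> S"
     "x' \<in> carrier R" "s' \<in> S" "y' \<in> carrier R" "t' \<in> S"
   and e: "fr x' s' = fr x s" "fr y' t' = fr y t"
  shows "fr (x' \<otimes> y') (s' \<otimes> t') = fr (x \<otimes> y) (s \<otimes> t)"
proof -
  obtain u where u: "u \<in> S" "u \<otimes> (x' \<otimes> s \<ominus> x \<otimes> s') = \<zero>" using e(1) loc_frac_eq_iff c by blast
  obtain v where v: "v \<in> S" "v \<otimes> (y' \<otimes> t \<ominus> y \<otimes> t') = \<zero>" using e(2) loc_frac_eq_iff c by blast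
  have cc: "u \<in> carrier R" "v \<in> carrier R" "s \<in> carrier R" "t \<in> carrier R" "s' \<in> carrier R" "t' \<in> carrier R"
    using u v c S_carrier by auto
  have "(u \<otimes> v) \<otimes> ((x' \<otimes> y') \<otimes> (s \<otimes> t) \<ominus> (x \<otimes> y) \<otimes> (s' \<otimes> t')) =
     (v \<otimes> y' \<otimes> t) \<otimes> (u \<otimes> (x' \<otimes> s \<ominus> x \<otimes> s')) \<oplus> (u \<otimes> x \<otimes> s') \<otimes> (v \<otimes> (y' \<otimes> t \<ominus> y \<otimes> t'))"
    using cc c by algebra
  also have "\<dots> = \<zero>" using u v cc c by simp
  finally show ?thesis using c u v S_mult by (intro loc_frac_eqI) auto
qed

lemma loc_frac_add_cong:
  assumes c: "x \<in> carrier R" "s \<in> S" "y \<in> carrier R" "t \<in> S"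
     "x' \<in> carrier R" "s' \<in> S" "y' \<in> carrier R" "t' \<in> S"
   and e: "fr x' s' = fr x s" "fr y' t' = fr y t"
  shows "fr (x' \<otimes> t' \<oplus> y' \<otimes> s') (s' \<otimes> t') = fr (x \<otimes> t \<oplus> y \<otimes> s) (s \<otimes> t)"
proof -
  obtain u where u: "u \<in> S" "u \<otimes> (x' \<otimes> s \<ominus> x \<otimes> s') = \<zero>" using e(1) loc_frac_eq_iff c by blast
  obtain v where v: "v \<in> S" "v \<otimes> (y' \<otimes> t \<ominus> y \<otimes> t') = \<zero>" using e(2) loc_frac_eq_iff c by blast
  have cc: "u \<in> carrier R" "v \<in> carrier R" "s \<in> carrier R" "t \<in> carrier R" "s' \<in> carrier R" "t' \<in> carrier R"
    using u v c S_carrier by auto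
  have "(u \<otimes> v) \<otimes> ((x' \<otimes> t' \<oplus> y' \<otimes> s') \<otimes> (s \<otimes> t) \<ominus> (x \<otimes> t \<oplus> y \<otimes> s) \<otimes> (s' \<otimes> t')) =
     (v \<otimes> t \<otimes> t') \<otimes> (u \<otimes> (x' \<otimes> s \<ominus> x \<otimes> s')) \<oplus> (u \<otimes> s \<otimes> s') \<otimes> (v \<otimes> (y' \<otimes> t \<ominus> y \<otimes> t'))"
    using cc c by algebra
  also have "\<dots> = \<zero>" using u v cc c by simp
  finally show ?thesis using c cc u v S_mult by (intro loc_frac_eqI) auto
qed

lemma localization_mult:
  assumes "x \<in> carrier R" "s \<in> S" "y \<in> carrier R" "t \<in> S"
  shows "fr x s \<otimes>\<^bsub>L\<^esub> fr y t = fr (x \<otimes> y) (s \<otimes> t)"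
proof -
  have "fr x s \<otimes>\<^bsub>L\<^esub> fr y t = fr (fst (loc_rep (fr x s)) \<otimes> fst (loc_rep (fr y t)))
      (snd (loc_rep (fr x s)) \<otimes> snd (loc_rep (fr y t)))"
    unfolding localization_def by simp
  also have "\<dots> = fr (x \<otimes> y) (s \<otimes> t)"
    by (rule loc_frac_mult_cong) (use assms loc_rep_props in auto)
  finally show ?thesis .
qed

lemma localization_add:
  assumes "x \<in> carrier R" "s \<in> S" "y \<in> carrier R" "t \<in> S"
  shows "fr x s \<oplus>\<^bsub>L\<^esub> fr y t = fr (x \<otimes> t \<oplus> y \<otimes> s) (s \<otimes> t)"
proof -
  have "fr x s \<oplus>\<^bsub>L\<^esub> fr y t = fr (fst (loc_rep (fr x s)) \<otimes> snd (loc_rep (fr y t)) \<oplus>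
      fst (loc_rep (fr y t)) \<otimes> snd (loc_rep (fr x s))) (snd (loc_rep (fr x s)) \<otimes> snd (loc_rep (fr y t)))"
    unfolding localization_def by simp
  also have "\<dots> = fr (x \<otimes> t \<oplus> y \<otimes> s) (s \<otimes> t)"
    by (rule loc_frac_add_cong) (use assms loc_rep_props in auto)
  finally show ?thesis .
qed

lemma localization_abelian_group: "abelian_group L"
proof (rule abelian_groupI)
  fix U V assume "U \<in> carrier L" "V \<in> carrier L"
  then show "U \<oplus>\<^bsub>L\<^esub> V \<in> carrier L"
    by (elim localization_cases) (auto simp: localization_add S_mult S_carrier intro!: loc_frac_closed)
next
  show "\<zero>\<^bsub>L\<^esub> \<in> carrier L" using localization_zero loc_frac_closed one_S by simp
next
  fix U V W assume "U \<in> carrier L" "V \<in> carrier L" "W \<in> carrier L"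
  then show "U \<oplus>\<^bsub>L\<^esub> V \<oplus>\<^bsub>L\<^esub> W = U \<oplus>\<^bsub>L\<^esub> (V \<oplus>\<^bsub>L\<^esub> W)"
  proof (elim localization_cases)
    fix x s y t z r assume c: "x \<in> carrier R" "s \<in> S" "y \<in> carrier R" "t \<in> S" "z \<in> carrier R" "r \<in> S"
      and e: "U = fr x s" "V = fr y t" "W = fr z r"
    have cc: "s \<in> carrier R" "t \<in> carrier R" "r \<in> carrier R" using c S_carrier by auto
    show ?thesis unfolding e using c cc
      by (simp add: localization_add S_mult) (rule loc_frac_cross_eqI, auto simp: S_mult, algebra)
  qed
next
  fix U V assume "U \<in> carrier L" "V \<in> carrier L"
  then show "U \<oplus>\<^bsub>L\<^esub> V = V \<oplus>\<^bsub>L\<^esub> U"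
  proof (elim localization_cases)
    fix x s y t assume c: "x \<in> carrier R" "s \<in> S" "y \<in> carrier R" "t \<in> S"
      and e: "U = fr x s" "V = fr y t"
    have cc: "s \<in> carrier R" "t \<in> carrier R" using c S_carrier by auto
    show ?thesis unfolding e using c cc
      by (simp add: localization_add S_mult) (rule loc_frac_cross_eqI, auto simp: S_mult, algebra)
  qed
next
  fix U assume "U \<in> carrier L"
  then show "\<zero>\<^bsub>L\<^esub> \<oplus>\<^bsub>L\<^esub> U = U"
  proof (elim localization_cases)
    fix x s assume c: "x \<in> carrier R" "s \<in> S" and e: "U = fr x s"
    have cc: "s \<in> carrier R" using c S_carrier by auto
    show ?thesis unfolding e localization_zero using c cc one_S
      by (simp add: localization_add S_mult)
  qed
next
  fix U assume "U \<in> carrier L"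
  then show "\<exists>V\<in>carrier L. V \<oplus>\<^bsub>L\<^esub> U = \<zero>\<^bsub>L\<^esub>"
  proof (elim localization_cases)
    fix x s assume c: "x \<in> carrier R" "s \<in> S" and e: "U = fr x s"
    have cc: "s \<in> carrier R" using c S_carrier by auto
    have "fr (\<ominus> x) s \<oplus>\<^bsub>L\<^esub> U = \<zero>\<^bsub>L\<^esub>" unfolding e localization_zero using c cc one_S
      by (simp add: localization_add S_mult) (rule loc_frac_cross_eqI, auto simp: S_mult, algebra)
    then show ?thesis using c loc_frac_closed by (intro bexI[of _ "fr (\<ominus> x) s"]) auto
  qed
qed

lemma localization_comm_monoid: "comm_monoid L"
proof (rule comm_monoidI)
  fix U V assume "U \<in> carrier L" "V \<in> carrier L"
  then show "U \<otimes>\<^bsub>L\<^esub> V \<in> carrier L"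
    by (elim localization_cases) (auto simp: localization_mult S_mult S_carrier intro!: loc_frac_closed)
next
  show "\<one>\<^bsub>L\<^esub> \<in> carrier L" using localization_one loc_frac_closed one_S by simp
next
  fix U V W assume "U \<in> carrier L" "V \<in> carrier L" "W \<in> carrier L"
  then show "U \<otimes>\<^bsub>L\<^esub> V \<otimes>\<^bsub>L\<^esub> W = U \<otimes>\<^bsub>L\<^esub> (V \<otimes>\<^bsub>L\<^esub> W)"
  proof (elim localization_cases)
    fix x s y t z r assume c: "x \<in> carrier R" "s \<in> S" "y \<in> carrier R" "t \<in> S" "z \<in> carrier R" "r \<in> S"
      and e: "U = fr x s" "V = fr y t" "W = fr z r"
    have cc: "s \<in> carrier R" "t \<in> carrier R" "r \<in> carrier R" using c S_carrier by auto
    show ?thesis unfolding e using c cc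
      by (simp add: localization_mult S_mult) (rule loc_frac_cross_eqI, auto simp: S_mult, algebra)
  qed
next
  fix U assume "U \<in> carrier L"
  then show "\<one>\<^bsub>L\<^esub> \<otimes>\<^bsub>L\<^esub> U = U"
  proof (elim localization_cases)
    fix x s assume c: "x \<in> carrier R" "s \<in> S" and e: "U = fr x s"
    have cc: "s \<in> carrier R" using c S_carrier by auto
    show ?thesis unfolding e localization_one using c cc one_S
      by (simp add: localization_mult S_mult)
  qed
next
  fix U V assume "U \<in> carrier L" "V \<in> carrier L"
  then show "U \<otimes>\<^bsub>L\<^esub> V = V \<otimes>\<^bsub>L\<^esub> U"
  proof (elim localization_cases)
    fix x s y t assume c: "x \<in> carrier R" "s \<in> S" "y \<in> carrier R" "t \<in> S"
      and e: "U = fr x s" "V = fr y t"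
    have cc: "s \<in> carrier R" "t \<in> carrier R" using c S_carrier by auto
    show ?thesis unfolding e using c cc
      by (simp add: localization_mult S_mult) (rule loc_frac_cross_eqI, auto simp: S_mult, algebra)
  qed
qed

lemma localization_cring: "cring L"
proof (rule cringI[OF localization_abelian_group localization_comm_monoid])
  fix U V W assume "U \<in> carrier L" "V \<in> carrier L" "W \<in> carrier L"
  then show "(U \<oplus>\<^bsub>L\<^esub> V) \<otimes>\<^bsub>L\<^esub> W = U \<otimes>\<^bsub>L\<^esub> W \<oplus>\<^bsub>L\<^esub> V \<otimes>\<^bsub>L\<^esub> W"
  proof (elim localization_cases)
    fix x s y t z r assume c: "x \<in> carrier R" "s \<in> S" "y \<in> carrier R" "t \<in> S" "z \<in> carrier R" "r \<in> S"
      and e: "U = fr x s" "V = fr y t" "W = fr z r"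
    have cc: "s \<in> carrier R" "t \<in> carrier R" "r \<in> carrier R" using c S_carrier by auto
    show ?thesis unfolding e using c cc
      by (simp add: localization_mult localization_add S_mult) (rule loc_frac_cross_eqI, auto simp: S_mult, algebra)
  qed
qed

lemma loc_frac_eq_zero_iff:
  assumes "x \<in> carrier R" "s \<in> S"
  shows "fr x s = \<zero>\<^bsub>L\<^esub> \<longleftrightarrow> (\<exists>u\<in>S. u \<otimes> x = \<zero>)"
  using loc_frac_eq_iff[OF assms zero_closed one_S] assms S_carrier
  by (simp add: localization_zero minus_eq)

lemma loc_can_eq: "loc_can R S x = fr x \<one>"
  unfolding loc_can_def by simp

lemma loc_can_ring_hom: "loc_can R S \<in> ring_hom R L"
  by (rule ring_hom_memI)
    (simp_all add: loc_can_eq loc_frac_closed one_S localization_mult localization_add localization_one)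

sublocale Loc: cring L
  by (rule localization_cring)

sublocale can: ring_hom_ring R L "loc_can R S"
  by (rule ring_hom_ringI2[OF ring_axioms Loc.ring_axioms loc_can_ring_hom])

lemma loc_ext_eq_zero_iff:
  assumes "I \<subseteq> carrier R"
  shows "loc_ext R S I = {\<zero>\<^bsub>L\<^esub>} \<longleftrightarrow> (\<forall>i\<in>I. \<exists>u\<in>S. u \<otimes> i = \<zero>)"
proof -
  have sub: "loc_can R S ` I \<subseteq> carrier L" using assms by auto
  have "loc_ext R S I = {\<zero>\<^bsub>L\<^esub>} \<longleftrightarrow> loc_can R S ` I \<subseteq> {\<zero>\<^bsub>L\<^esub>}"
  proof
    assume "loc_ext R S I = {\<zero>\<^bsub>L\<^esub>}"
    then show "loc_can R S ` I \<subseteq> {\<zero>\<^bsub>L\<^esub>}"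
      using Loc.genideal_self[OF sub] unfolding loc_ext_def by simp
  next
    assume "loc_can R S ` I \<subseteq> {\<zero>\<^bsub>L\<^esub>}"
    then have "loc_ext R S I \<subseteq> {\<zero>\<^bsub>L\<^esub>}"
      unfolding loc_ext_def by (rule Loc.genideal_minimal[OF Loc.zeroideal])
    moreover have "\<zero>\<^bsub>L\<^esub> \<in> loc_ext R S I"
      unfolding loc_ext_def
      using additive_subgroup.zero_closed[OF ideal.axioms(1)[OF Loc.genideal_ideal[OF sub]]] .
    ultimately show "loc_ext R S I = {\<zero>\<^bsub>L\<^esub>}" by blast
  qed
  also have "\<dots> \<longleftrightarrow> (\<forall>i\<in>I. loc_can R S i = \<zero>\<^bsub>L\<^esub>)" by blast
  also have "\<dots> \<longleftrightarrow> (\<forall>i\<in>I. \<exists>u\<in>S. u \<otimes> i = \<zero>)"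
    using loc_frac_eq_zero_iff[OF subsetD[OF assms] one_S] by (simp add: loc_can_eq)
  finally show ?thesis .
qed

lemma loc_ext_genideal:
  assumes F: "F \<subseteq> carrier R"
  shows "loc_ext R S (Idl F) = Idl\<^bsub>L\<^esub> (loc_can R S ` F)"
proof
  let ?K = "Idl\<^bsub>L\<^esub> (loc_can R S ` F)"
  have sub: "loc_can R S ` F \<subseteq> carrier L" using F by auto
  have K: "ideal ?K L" using Loc.genideal_ideal[OF sub] .
  have "F \<subseteq> {x \<in> carrier R. loc_can R S x \<in> ?K}"
    using F Loc.genideal_self[OF sub] by auto
  then have "Idl F \<subseteq> {x \<in> carrier R. loc_can R S x \<in> ?K}"
    by (rule genideal_minimal[OF can.ideal_vimage[OF K]])
  then show "loc_ext R S (Idl F) \<subseteq> ?K"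
    unfolding loc_ext_def by (intro Loc.genideal_minimal[OF K]) blast
  have "Idl F \<subseteq> carrier R" using ideal.Icarr[OF genideal_ideal[OF F]] by blast
  then have "loc_can R S ` (Idl F) \<subseteq> carrier L" by auto
  then show "?K \<subseteq> loc_ext R S (Idl F)"
    unfolding loc_ext_def by (rule Loc.subset_Idl_subset) (use genideal_self[OF F] in blast)
qed

end

section \<open>Arithmetical rings\<close>

text \<open>Elementwise form of ``the ideals of \<open>S\<inverse>R\<close> form a chain'', see
  \<open>loc_chained_iff_ideals_chain\<close>.\<close>

definition loc_chained :: "('a, 'm) ring_scheme \<Rightarrow> 'a set \<Rightarrow> bool" where
  "loc_chained R S \<longleftrightarrow> (\<forall>a\<in>carrier R. \<forall>b\<in>carrier R. \<exists>s\<in>S. \<exists>x\<in>carrier R.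
     s \<otimes>\<^bsub>R\<^esub> a = x \<otimes>\<^bsub>R\<^esub> b \<or> s \<otimes>\<^bsub>R\<^esub> b = x \<otimes>\<^bsub>R\<^esub> a)"

context mult_subset
begin

lemma loc_frac_dvdI:
  assumes c: "u \<in> carrier R" "s \<in> S" "v \<in> carrier R" "t \<in> S" "q \<in> S" "x \<in> carrier R"
    and e: "q \<otimes> u = x \<otimes> v"
  shows "fr u s \<in> PIdl\<^bsub>L\<^esub> (fr v t)"
proof -
  have cc: "s \<in> carrier R" "t \<in> carrier R" "q \<in> carrier R" using c S_carrier by auto
  have "fr (x \<otimes> t) (q \<otimes> s) \<otimes>\<^bsub>L\<^esub> fr v t = fr (x \<otimes> t \<otimes> v) (q \<otimes> s \<otimes> t)"
    using c cc S_mult by (simp add: localization_mult)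
  also have "\<dots> = fr u s"
  proof (rule loc_frac_cross_eqI)
    have "x \<otimes> t \<otimes> v \<otimes> s = (x \<otimes> v) \<otimes> (s \<otimes> t)" using c cc by algebra
    also have "\<dots> = (q \<otimes> u) \<otimes> (s \<otimes> t)" using e by simp
    also have "\<dots> = u \<otimes> (q \<otimes> s \<otimes> t)" using c cc by algebra
    finally show "x \<otimes> t \<otimes> v \<otimes> s = u \<otimes> (q \<otimes> s \<otimes> t)" .
  qed (use c cc S_mult in auto)
  finally have "fr u s = fr (x \<otimes> t) (q \<otimes> s) \<otimes>\<^bsub>L\<^esub> fr v t" ..
  moreover have "fr (x \<otimes> t) (q \<otimes> s) \<in> carrier L" using c cc S_mult[of q s] by (intro loc_frac_closed) auto
  ultimately show ?thesis unfolding cgenideal_def by blast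
qed

lemma loc_can_dvdD:
  assumes ab: "a \<in> carrier R" "b \<in> carrier R"
    and dvd: "loc_can R S a \<in> PIdl\<^bsub>L\<^esub> (loc_can R S b)"
  shows "\<exists>s\<in>S. \<exists>x\<in>carrier R. s \<otimes> a = x \<otimes> b"
proof -
  obtain Y where Y: "Y \<in> carrier L" "loc_can R S a = Y \<otimes>\<^bsub>L\<^esub> loc_can R S b"
    using dvd unfolding cgenideal_def by blast
  obtain x t where x: "x \<in> carrier R" "t \<in> S" "Y = fr x t" using Y(1) by (rule localization_cases)
  have "fr a \<one> = fr (x \<otimes> b) t"
    using Y(2) x ab one_S S_carrier[of t] by (simp add: loc_can_eq localization_mult)
  then obtain u where u: "u \<in> S" "u \<otimes> (a \<otimes> t \<ominus> x \<otimes> b \<otimes> \<one>) = \<zero>"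
    using loc_frac_eq_iff x ab one_S by auto
  have c: "u \<in> carrier R" "t \<in> carrier R" using u x S_carrier by auto
  have "(u \<otimes> t) \<otimes> a = u \<otimes> (a \<otimes> t \<ominus> x \<otimes> b \<otimes> \<one>) \<oplus> (u \<otimes> x) \<otimes> b"
    using c ab x by algebra
  then have "(u \<otimes> t) \<otimes> a = (u \<otimes> x) \<otimes> b" using u c ab x by simp
  then show ?thesis using u x S_mult c by blast
qed

lemma loc_chained_iff_divisibility_chain:
  "loc_chained R S \<longleftrightarrow> (\<forall>U\<in>carrier L. \<forall>V\<in>carrier L. U \<in> PIdl\<^bsub>L\<^esub> V \<or> V \<in> PIdl\<^bsub>L\<^esub> U)"
proof (intro iffI ballI)
  fix U V assume ch: "loc_chained R S" and UV: "U \<in> carrier L" "V \<in> carrier L"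
  obtain u s where u: "u \<in> carrier R" "s \<in> S" "U = fr u s" using UV(1) by (rule localization_cases)
  obtain v t where v: "v \<in> carrier R" "t \<in> S" "V = fr v t" using UV(2) by (rule localization_cases)
  obtain q x where "q \<in> S" "x \<in> carrier R" "q \<otimes> u = x \<otimes> v \<or> q \<otimes> v = x \<otimes> u"
    using ch u v unfolding loc_chained_def by blast
  then show "U \<in> PIdl\<^bsub>L\<^esub> V \<or> V \<in> PIdl\<^bsub>L\<^esub> U"
    using loc_frac_dvdI u v by blast
next
  assume total: "\<forall>U\<in>carrier L. \<forall>V\<in>carrier L. U \<in> PIdl\<^bsub>L\<^esub> V \<or> V \<in> PIdl\<^bsub>L\<^esub> U"
  show "loc_chained R S" unfolding loc_chained_def
  proof (intro ballI)
    fix a b assume ab: "a \<in> carrier R" "b \<in> carrier R"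
    then have "loc_can R S a \<in> PIdl\<^bsub>L\<^esub> (loc_can R S b) \<or> loc_can R S b \<in> PIdl\<^bsub>L\<^esub> (loc_can R S a)"
      using total by simp
    then show "\<exists>s\<in>S. \<exists>x\<in>carrier R. s \<otimes> a = x \<otimes> b \<or> s \<otimes> b = x \<otimes> a"
      using loc_can_dvdD ab by blast
  qed
qed

lemma loc_chained_iff_ideals_chain:
  "loc_chained R S \<longleftrightarrow> (\<forall>I J. ideal I L \<and> ideal J L \<longrightarrow> I \<subseteq> J \<or> J \<subseteq> I)"
  using loc_chained_iff_divisibility_chain Loc.ideals_chain_iff_divisibility_chain by simp

end

locale max_localization = cring R for R (structure) + fixes M
  assumes M_maximal: "maximalideal M R"
begin

lemma M_ideal: "ideal M R"
  using M_maximal maximalideal.axioms(1) by blast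

lemma M_prime: "a \<in> carrier R \<Longrightarrow> b \<in> carrier R \<Longrightarrow> a \<otimes> b \<in> M \<Longrightarrow> a \<in> M \<or> b \<in> M"
  using primeideal.I_prime[OF maximalideal_prime[OF M_maximal]] by blast

lemma one_notin_M: "\<one> \<notin> M"
  using ideal.one_imp_carrier[OF M_ideal] maximalideal.I_notcarr[OF M_maximal] by blast

end

sublocale max_localization \<subseteq> mult_subset R "carrier R - M"
  by unfold_locales (use one_notin_M M_prime in auto)

context max_localization
begin

lemma numerator_in_M_cong:
  assumes c: "x \<in> carrier R" "s \<in> carrier R - M" "y \<in> carrier R" "t \<in> carrier R - M"
    and e: "fr x s = fr y t" and x: "x \<in> M"
  shows "y \<in> M"
proof -
  obtain u where u: "u \<in> carrier R - M" "u \<otimes> (x \<otimes> t \<ominus> y \<otimes> s) = \<zero>"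
    using e loc_frac_eq_iff[OF c] by blast
  have uc: "u \<in> carrier R" "s \<in> carrier R" "t \<in> carrier R" using u c by auto
  have "u \<otimes> (x \<otimes> t) = u \<otimes> (y \<otimes> s) \<oplus> u \<otimes> (x \<otimes> t \<ominus> y \<otimes> s)" using uc c(1,3) by algebra
  then have "(u \<otimes> y) \<otimes> s = u \<otimes> (x \<otimes> t)" using u uc c by (simp add: m_assoc)
  also have "\<dots> \<in> M" using ideal.I_l_closed[OF M_ideal ideal.I_r_closed[OF M_ideal x]] uc by simp
  finally show ?thesis using M_prime[of "u \<otimes> y" s] M_prime[of u y] u c by auto
qed

lemma loc_frac_Units_iff:
  assumes x: "x \<in> carrier R" and s: "s \<in> carrier R - M"
  shows "fr x s \<in> Units L \<longleftrightarrow> x \<notin> M"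
proof
  assume "fr x s \<in> Units L"
  then obtain V where V: "V \<in> carrier L" "fr x s \<otimes>\<^bsub>L\<^esub> V = \<one>\<^bsub>L\<^esub>" unfolding Units_def by blast
  obtain y t where y: "y \<in> carrier R" "t \<in> carrier R - M" "V = fr y t"
    using V(1) by (rule localization_cases)
  have e: "fr (x \<otimes> y) (s \<otimes> t) = fr \<one> \<one>"
    using V(2) x s y by (simp add: localization_mult localization_one)
  show "x \<notin> M"
  proof
    assume "x \<in> M"
    then have "x \<otimes> y \<in> M" using ideal.I_r_closed[OF M_ideal _ y(1)] by blast
    moreover have "s \<otimes> t \<in> carrier R - M" using S_mult s y(2) .
    ultimately have "\<one> \<in> M" using numerator_in_M_cong[OF _ _ _ _ e] x y one_S by blast
    then show False using one_notin_M by simp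
  qed
next
  assume x': "x \<notin> M"
  have fx: "fr x s \<in> carrier L" "fr s x \<in> carrier L"
    using x x' s loc_frac_closed[of x s] loc_frac_closed[of s x] by auto
  have "fr x s \<otimes>\<^bsub>L\<^esub> fr s x = fr (x \<otimes> s) (s \<otimes> x)"
    by (rule localization_mult) (use x x' s in auto)
  also have "\<dots> = fr \<one> \<one>"
    by (rule loc_frac_cross_eqI) (use x x' s one_S S_mult[of s x] in \<open>auto simp: m_comm\<close>)
  finally have "fr x s \<otimes>\<^bsub>L\<^esub> fr s x = \<one>\<^bsub>L\<^esub>" by (simp add: localization_one)
  moreover have "fr s x \<otimes>\<^bsub>L\<^esub> fr x s = fr x s \<otimes>\<^bsub>L\<^esub> fr s x" using Loc.m_comm fx by blast
  ultimately show "fr x s \<in> Units L" using fx unfolding Units_def by auto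
qed

lemma localization_nonunits_add:
  assumes "U \<in> carrier L" "V \<in> carrier L" "U \<notin> Units L" "V \<notin> Units L"
  shows "U \<oplus>\<^bsub>L\<^esub> V \<notin> Units L"
proof -
  obtain x s where x: "x \<in> carrier R" "s \<in> carrier R - M" "U = fr x s"
    using assms(1) by (rule localization_cases)
  obtain y t where y: "y \<in> carrier R" "t \<in> carrier R - M" "V = fr y t"
    using assms(2) by (rule localization_cases)
  have "x \<in> M" "y \<in> M" using assms(3,4) x y loc_frac_Units_iff by auto
  then have "x \<otimes> t \<in> M" "y \<otimes> s \<in> M" using ideal.I_r_closed[OF M_ideal] x(2) y(2) by auto
  then have "x \<otimes> t \<oplus> y \<otimes> s \<in> M"
    using additive_subgroup.a_closed[OF ideal.axioms(1)[OF M_ideal]] by blast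
  then show ?thesis
    using x y loc_frac_Units_iff[of "x \<otimes> t \<oplus> y \<otimes> s" "s \<otimes> t"] S_mult
    by (simp add: localization_add)
qed

lemma arithmetical_imp_loc_chained:
  assumes "arithmetical R"
  shows "loc_chained R (carrier R - M)"
  unfolding loc_chained_def
proof (intro ballI)
  fix a b assume ab: "a \<in> carrier R" "b \<in> carrier R"
  let ?a = "loc_can R (carrier R - M) a" and ?b = "loc_can R (carrier R - M) b"
  have "{a, b} \<subseteq> carrier R" using ab by simp
  then have "fin_gen_ideal (Idl {a, b}) R"
    unfolding fin_gen_ideal_def by (intro conjI genideal_ideal exI[of _ "{a, b}"]) auto
  then have "principalideal (loc_ext R (carrier R - M) (Idl {a, b})) L"
    using assms M_maximal unfolding arithmetical_def locally_principal_def by blast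
  moreover have "loc_ext R (carrier R - M) (Idl {a, b}) = Idl\<^bsub>L\<^esub> {?a, ?b}"
    using loc_ext_genideal[of "{a, b}"] ab by simp
  ultimately obtain w where "w \<in> carrier L" "Idl\<^bsub>L\<^esub> {?a, ?b} = PIdl\<^bsub>L\<^esub> w"
    using principalideal.generate Loc.cgenideal_eq_genideal by metis
  then have "?a \<in> PIdl\<^bsub>L\<^esub> ?b \<or> ?b \<in> PIdl\<^bsub>L\<^esub> ?a"
    using Loc.principal_pair_comparable[OF localization_nonunits_add] ab by simp
  then show "\<exists>s\<in>carrier R - M. \<exists>x\<in>carrier R. s \<otimes> a = x \<otimes> b \<or> s \<otimes> b = x \<otimes> a"
    using loc_can_dvdD ab by blast
qed

end

lemma arithmetical_iff_loc_chained:
  assumes "cring R"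
  shows "arithmetical R \<longleftrightarrow> (\<forall>M. maximalideal M R \<longrightarrow> loc_chained R (carrier R - M))"
proof (intro iffI allI impI)
  fix M assume "arithmetical R" "maximalideal M R"
  then show "loc_chained R (carrier R - M)"
    using max_localization.arithmetical_imp_loc_chained[of R M] assms
    unfolding max_localization_def max_localization_axioms_def by blast
next
  assume ch: "\<forall>M. maximalideal M R \<longrightarrow> loc_chained R (carrier R - M)"
  show "arithmetical R" unfolding arithmetical_def fin_gen_ideal_def locally_principal_def
  proof (intro conjI allI impI assms)
    fix I M assume "ideal I R \<and> (\<exists>F. finite F \<and> F \<subseteq> carrier R \<and> I = Idl\<^bsub>R\<^esub> F)"
      and M: "maximalideal M R"
    then obtain F where F: "finite F" "F \<subseteq> carrier R" "I = Idl\<^bsub>R\<^esub> F" by blast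
    interpret max_localization R M using assms M by (simp add: max_localization_def max_localization_axioms_def)
    have "\<exists>w\<in>carrier L. Idl\<^bsub>L\<^esub> (loc_can R (carrier R - M) ` F) = PIdl\<^bsub>L\<^esub> w"
      using ch M loc_chained_iff_divisibility_chain F
      by (intro Loc.finite_genideal_principal) auto
    then obtain w where "w \<in> carrier L" "loc_ext R (carrier R - M) I = PIdl\<^bsub>L\<^esub> w"
      using loc_ext_genideal[OF F(2)] F(3) by auto
    then show "principalideal (loc_ext R (carrier R - M) I) (loc_at R M)"
      using Loc.cgenideal_is_principalideal by simp
  qed
qed

section \<open>The amalgamated algebra\<close>

lemma RDirProd_simps:
  "(a1, b1) \<otimes>\<^bsub>RDirProd R S\<^esub> (a2, b2) = (a1 \<otimes>\<^bsub>R\<^esub> a2, b1 \<otimes>\<^bsub>S\<^esub> b2)"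
  "(a1, b1) \<oplus>\<^bsub>RDirProd R S\<^esub> (a2, b2) = (a1 \<oplus>\<^bsub>R\<^esub> a2, b1 \<oplus>\<^bsub>S\<^esub> b2)"
  "\<one>\<^bsub>RDirProd R S\<^esub> = (\<one>\<^bsub>R\<^esub>, \<one>\<^bsub>S\<^esub>)"
  "\<zero>\<^bsub>RDirProd R S\<^esub> = (\<zero>\<^bsub>R\<^esub>, \<zero>\<^bsub>S\<^esub>)"
  unfolding RDirProd_def DirProd_def by (simp_all add: monoid.defs)

locale amalgamation_setup = A: cring A + B: cring B for A (structure) and B (structure) +
  fixes f and J
  assumes f_hom: "f \<in> ring_hom A B" and J_ideal: "ideal J B"

sublocale amalgamation_setup \<subseteq> f: ring_hom_ring A B f
  using ring_hom_ringI2[OF A.ring_axioms B.ring_axioms f_hom] .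

sublocale amalgamation_setup \<subseteq> J: ideal J B
  by (rule J_ideal)

context amalgamation_setup
begin

abbreviation "D \<equiv> amalgamation A B f J"

lemma amal_mult [simp]: "(a1, b1) \<otimes>\<^bsub>D\<^esub> (a2, b2) = (a1 \<otimes> a2, b1 \<otimes>\<^bsub>B\<^esub> b2)"
  and amal_add [simp]: "(a1, b1) \<oplus>\<^bsub>D\<^esub> (a2, b2) = (a1 \<oplus> a2, b1 \<oplus>\<^bsub>B\<^esub> b2)"
  and amal_one: "\<one>\<^bsub>D\<^esub> = (\<one>, \<one>\<^bsub>B\<^esub>)"
  and amal_zero: "\<zero>\<^bsub>D\<^esub> = (\<zero>, \<zero>\<^bsub>B\<^esub>)"
  unfolding amalgamation_def by (simp_all add: RDirProd_simps)

lemma amal_mem_iff: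
  "(a, b) \<in> carrier D \<longleftrightarrow> a \<in> carrier A \<and> b \<in> carrier B \<and> b \<ominus>\<^bsub>B\<^esub> f a \<in> J"
proof
  assume "(a, b) \<in> carrier D"
  then obtain j where j: "a \<in> carrier A" "j \<in> J" "b = f a \<oplus>\<^bsub>B\<^esub> j"
    unfolding amalgamation_def by auto
  moreover have "f a \<oplus>\<^bsub>B\<^esub> j \<ominus>\<^bsub>B\<^esub> f a = j"
    using f.hom_closed[OF j(1)] J.a_Hcarr[OF j(2)] by algebra
  ultimately show "a \<in> carrier A \<and> b \<in> carrier B \<and> b \<ominus>\<^bsub>B\<^esub> f a \<in> J" by simp
next
  assume h: "a \<in> carrier A \<and> b \<in> carrier B \<and> b \<ominus>\<^bsub>B\<^esub> f a \<in> J"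
  then have "b = f a \<oplus>\<^bsub>B\<^esub> (b \<ominus>\<^bsub>B\<^esub> f a)" using f.hom_closed[of a] by algebra
  then show "(a, b) \<in> carrier D" unfolding amalgamation_def using h by auto
qed

lemma amal_memI: "a \<in> carrier A \<Longrightarrow> j \<in> J \<Longrightarrow> (a, f a \<oplus>\<^bsub>B\<^esub> j) \<in> carrier D"
  unfolding amalgamation_def by auto

lemma amal_cases:
  assumes "x \<in> carrier D"
  obtains a j where "a \<in> carrier A" "j \<in> J" "x = (a, f a \<oplus>\<^bsub>B\<^esub> j)"
  using assms unfolding amalgamation_def by auto

lemma amal_pair_cases:
  assumes "x \<in> carrier D"
  obtains a b where "a \<in> carrier A" "b \<in> carrier B" "b \<ominus>\<^bsub>B\<^esub> f a \<in> J" "x = (a, b)"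
  using assms amal_mem_iff by (cases x) blast

lemma amal_diag_mem: "a \<in> carrier A \<Longrightarrow> (a, f a) \<in> carrier D"
  using amal_memI[of a "\<zero>\<^bsub>B\<^esub>"] by simp

lemma amal_zero_J_mem: "j \<in> J \<Longrightarrow> (\<zero>, j) \<in> carrier D"
  using amal_memI[of \<zero> j] J.a_Hcarr by simp

lemma amal_subring: "subring (carrier D) (RDirProd A B)"
proof -
  interpret AB: ring "RDirProd A B" by (rule RDirProd_ring[OF A.ring_axioms B.ring_axioms])
  have sub: "carrier D \<subseteq> carrier (RDirProd A B)"
    unfolding RDirProd_carrier using amal_mem_iff by auto
  show ?thesis
  proof (rule AB.subringI[OF sub])
    show "\<one>\<^bsub>RDirProd A B\<^esub> \<in> carrier D" using amal_diag_mem[of \<one>] by (simp add: RDirProd_simps)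
  next
    fix x assume "x \<in> carrier D"
    then obtain a b where ab: "a \<in> carrier A" "b \<in> carrier B" "b \<ominus>\<^bsub>B\<^esub> f a \<in> J" "x = (a, b)"
      by (rule amal_pair_cases)
    have "\<ominus>\<^bsub>RDirProd A B\<^esub> x = (\<ominus> a, \<ominus>\<^bsub>B\<^esub> b)"
      using ab by (intro AB.minus_equality) (auto simp: RDirProd_simps RDirProd_carrier A.l_neg B.l_neg)
    moreover have "\<ominus>\<^bsub>B\<^esub> b \<ominus>\<^bsub>B\<^esub> f (\<ominus> a) = \<ominus>\<^bsub>B\<^esub> (b \<ominus>\<^bsub>B\<^esub> f a)"
      using ab f.hom_closed[of a] by (simp add: B.minus_add B.minus_eq)
    ultimately show "\<ominus>\<^bsub>RDirProd A B\<^esub> x \<in> carrier D" using ab amal_mem_iff by auto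
  next
    fix x y assume "x \<in> carrier D" "y \<in> carrier D"
    then obtain a1 b1 a2 b2 where xy: "a1 \<in> carrier A" "b1 \<in> carrier B" "b1 \<ominus>\<^bsub>B\<^esub> f a1 \<in> J"
      "x = (a1, b1)" "a2 \<in> carrier A" "b2 \<in> carrier B" "b2 \<ominus>\<^bsub>B\<^esub> f a2 \<in> J" "y = (a2, b2)"
      by (metis amal_pair_cases)
    have "b1 \<otimes>\<^bsub>B\<^esub> b2 \<ominus>\<^bsub>B\<^esub> f (a1 \<otimes> a2) =
       (b1 \<ominus>\<^bsub>B\<^esub> f a1) \<otimes>\<^bsub>B\<^esub> b2 \<oplus>\<^bsub>B\<^esub> f a1 \<otimes>\<^bsub>B\<^esub> (b2 \<ominus>\<^bsub>B\<^esub> f a2)"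
      using xy(1,2,5,6) f.hom_closed[of a1] f.hom_closed[of a2] by (simp, algebra)
    moreover have "(b1 \<ominus>\<^bsub>B\<^esub> f a1) \<otimes>\<^bsub>B\<^esub> b2 \<oplus>\<^bsub>B\<^esub> f a1 \<otimes>\<^bsub>B\<^esub> (b2 \<ominus>\<^bsub>B\<^esub> f a2) \<in> J"
      by (rule J.a_closed[OF J.I_r_closed[OF xy(3,6)] J.I_l_closed[OF xy(7) f.hom_closed[OF xy(1)]]])
    ultimately show "x \<otimes>\<^bsub>RDirProd A B\<^esub> y \<in> carrier D"
      using xy amal_mem_iff by (simp add: RDirProd_simps)
    have "b1 \<oplus>\<^bsub>B\<^esub> b2 \<ominus>\<^bsub>B\<^esub> f (a1 \<oplus> a2) = (b1 \<ominus>\<^bsub>B\<^esub> f a1) \<oplus>\<^bsub>B\<^esub> (b2 \<ominus>\<^bsub>B\<^esub> f a2)"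
      using xy(1,2,5,6) f.hom_closed[of a1] f.hom_closed[of a2] by (simp, algebra)
    then show "x \<oplus>\<^bsub>RDirProd A B\<^esub> y \<in> carrier D"
      using xy J.a_closed[OF xy(3,7)] amal_mem_iff by (simp add: RDirProd_simps)
  qed
qed

lemma amal_cring: "cring D"
proof -
  interpret AB: ring "RDirProd A B" by (rule RDirProd_ring[OF A.ring_axioms B.ring_axioms])
  have "x \<otimes>\<^bsub>RDirProd A B\<^esub> y = y \<otimes>\<^bsub>RDirProd A B\<^esub> x" if "x \<in> carrier D" "y \<in> carrier D" for x y
    using that by (elim amal_pair_cases) (simp add: RDirProd_simps A.m_comm B.m_comm)
  then have "subcring (carrier D) (RDirProd A B)" by (rule AB.subcringI[OF amal_subring])
  then have "cring ((RDirProd A B)\<lparr>carrier := carrier D\<rparr>)"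
    using AB.subcring_iff subringE(1)[OF amal_subring] by blast
  then show ?thesis by (simp add: amalgamation_def)
qed

end

sublocale amalgamation_setup \<subseteq> D: cring "amalgamation A B f J"
  by (rule amal_cring)

context amalgamation_setup
begin

lemma fst_ring_hom: "fst \<in> ring_hom D A"
  by (rule ring_hom_memI) (auto elim: amal_pair_cases simp: amal_one)

lemma snd_ring_hom: "snd \<in> ring_hom D B"
  by (rule ring_hom_memI) (auto elim: amal_pair_cases simp: amal_one)

lemma diag_ring_hom: "(\<lambda>a. (a, f a)) \<in> ring_hom A D"
  by (rule ring_hom_memI) (simp_all add: amal_diag_mem amal_one)

definition fst_ideal where "fst_ideal M = {x \<in> carrier D. fst x \<in> M}"
definition snd_ideal where "snd_ideal N = {x \<in> carrier D. snd x \<in> N}"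

lemma fst_ideal_maximal:
  assumes M: "maximalideal M A"
  shows "maximalideal (fst_ideal M) D"
  unfolding fst_ideal_def
proof (rule ring_hom_ring.maximalideal_vimage)
  show "ring_hom_ring D A fst" by (rule ring_hom_ringI2[OF D.ring_axioms A.ring_axioms fst_ring_hom])
  show "\<one> \<notin> M" using ideal.one_imp_carrier maximalideal.axioms(1) maximalideal.I_notcarr M by metis
  show "\<exists>r\<in>carrier D. fst r = a \<otimes> \<one>" if "a \<in> carrier A" for a
    using that amal_diag_mem by force
qed (use M A.is_cring in simp_all)

lemma snd_ideal_maximal:
  assumes N: "maximalideal N B" and j: "j \<in> J" "j \<notin> N"
  shows "maximalideal (snd_ideal N) D"
  unfolding snd_ideal_def
proof (rule ring_hom_ring.maximalideal_vimage)
  show "ring_hom_ring D B snd" by (rule ring_hom_ringI2[OF D.ring_axioms B.ring_axioms snd_ring_hom])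
  show "\<exists>r\<in>carrier D. snd r = b \<otimes>\<^bsub>B\<^esub> j" if "b \<in> carrier B" for b
    using that j amal_zero_J_mem[OF J.I_l_closed] by force
qed (use N j B.is_cring J.a_Hcarr in simp_all)

lemma maximalideal_eq_fst_ideal:
  assumes P: "maximalideal P D" and J: "\<And>j. j \<in> J \<Longrightarrow> (\<zero>, j) \<in> P"
  shows "\<exists>M. maximalideal M A \<and> P = fst_ideal M"
proof -
  interpret P: maximalideal P D by (rule P)
  let ?M0 = "{a \<in> carrier A. (a, f a) \<in> P}"
  have "ideal ?M0 A"
    by (rule ring_hom_ring.ideal_vimage[OF ring_hom_ringI2[OF A.ring_axioms D.ring_axioms diag_ring_hom]
          P.is_ideal])
  moreover have "\<one> \<notin> ?M0" using P.I_notcarr P.one_imp_carrier amal_one by auto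
  ultimately obtain M where M: "maximalideal M A" "?M0 \<subseteq> M" using A.ex_maximalideal by blast
  have "P \<subseteq> fst_ideal M"
  proof
    fix x assume x: "x \<in> P"
    obtain a j where aj: "a \<in> carrier A" "j \<in> J" "x = (a, f a \<oplus>\<^bsub>B\<^esub> j)"
      using P.Icarr[OF x] by (rule amal_cases)
    have "x \<oplus>\<^bsub>D\<^esub> (\<zero>, \<ominus>\<^bsub>B\<^esub> j) \<in> P" using J[OF J.a_inv_closed[OF aj(2)]] x P.a_closed by blast
    moreover have "x \<oplus>\<^bsub>D\<^esub> (\<zero>, \<ominus>\<^bsub>B\<^esub> j) = (a, f a)"
      using aj f.hom_closed[OF aj(1)] J.a_Hcarr[OF aj(2)] by (simp, algebra)
    ultimately show "x \<in> fst_ideal M" unfolding fst_ideal_def using M(2) aj P.Icarr[OF x] by auto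
  qed
  moreover have "fst_ideal M \<noteq> carrier D"
    using maximalideal.I_notcarr[OF fst_ideal_maximal[OF M(1)]] by simp
  ultimately have "fst_ideal M = P"
    using D.maximalideal_eq_of_subset[OF P maximalideal.axioms(1)[OF fst_ideal_maximal[OF M(1)]]]
    by blast
  then show ?thesis using M(1) by blast
qed

lemma snd_ideal_ideal: "ideal N B \<Longrightarrow> ideal (snd_ideal N) D"
  unfolding snd_ideal_def
  by (rule ring_hom_ring.ideal_vimage[OF ring_hom_ringI2[OF D.ring_axioms B.ring_axioms snd_ring_hom]])

lemma snd_ideal_proper:
  assumes "\<one>\<^bsub>B\<^esub> \<notin> N"
  shows "snd_ideal N \<noteq> carrier D"
proof
  assume "snd_ideal N = carrier D"
  then have "\<one>\<^bsub>D\<^esub> \<in> snd_ideal N" using D.one_closed by simp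
  then show False using assms unfolding snd_ideal_def amal_one by simp
qed

lemma ideal_snd_colon:
  assumes P: "primeideal P D" and j: "j \<in> J" "(\<zero>, j) \<notin> P"
  shows "ideal {y \<in> carrier B. (\<zero>, y \<otimes>\<^bsub>B\<^esub> j) \<in> P} B" (is "ideal ?N0 B")
proof (rule B.ideal_commI)
  interpret P: primeideal P D by (rule P)
  have jc: "j \<in> carrier B" using J.a_Hcarr[OF j(1)] .
  show "\<zero>\<^bsub>B\<^esub> \<in> ?N0" using P.zero_closed jc by (simp add: amal_zero)
next
  interpret P: primeideal P D by (rule P)
  fix x y assume x: "x \<in> ?N0" and y: "y \<in> ?N0"
  then have "(\<zero>, x \<otimes>\<^bsub>B\<^esub> j) \<oplus>\<^bsub>D\<^esub> (\<zero>, y \<otimes>\<^bsub>B\<^esub> j) \<in> P" using P.a_closed by blast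
  moreover have "(\<zero>, x \<otimes>\<^bsub>B\<^esub> j) \<oplus>\<^bsub>D\<^esub> (\<zero>, y \<otimes>\<^bsub>B\<^esub> j) = (\<zero>, (x \<oplus>\<^bsub>B\<^esub> y) \<otimes>\<^bsub>B\<^esub> j)"
    using x y J.a_Hcarr[OF j(1)] by (simp add: B.l_distr)
  ultimately show "x \<oplus>\<^bsub>B\<^esub> y \<in> ?N0" using x y by simp
next
  interpret P: primeideal P D by (rule P)
  fix x r assume x: "x \<in> ?N0" and r: "r \<in> carrier B"
  have "(\<zero>, r \<otimes>\<^bsub>B\<^esub> j) \<otimes>\<^bsub>D\<^esub> (\<zero>, x \<otimes>\<^bsub>B\<^esub> j) \<in> P"
    using P.I_l_closed x amal_zero_J_mem[OF J.I_l_closed[OF j(1) r]] by blast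
  moreover have "(\<zero>, r \<otimes>\<^bsub>B\<^esub> j) \<otimes>\<^bsub>D\<^esub> (\<zero>, x \<otimes>\<^bsub>B\<^esub> j) = (\<zero>, (r \<otimes>\<^bsub>B\<^esub> x) \<otimes>\<^bsub>B\<^esub> j) \<otimes>\<^bsub>D\<^esub> (\<zero>, j)"
    using x r J.a_Hcarr[OF j(1)] by (simp, algebra)
  ultimately have "(\<zero>, (r \<otimes>\<^bsub>B\<^esub> x) \<otimes>\<^bsub>B\<^esub> j) \<otimes>\<^bsub>D\<^esub> (\<zero>, j) \<in> P" by simp
  moreover have "(\<zero>, (r \<otimes>\<^bsub>B\<^esub> x) \<otimes>\<^bsub>B\<^esub> j) \<in> carrier D"
    using amal_zero_J_mem[OF J.I_l_closed[OF j(1)]] x r by simp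
  ultimately have "(\<zero>, (r \<otimes>\<^bsub>B\<^esub> x) \<otimes>\<^bsub>B\<^esub> j) \<in> P"
    using P.I_prime amal_zero_J_mem[OF j(1)] j(2) by blast
  then show "r \<otimes>\<^bsub>B\<^esub> x \<in> ?N0" using x r by simp
qed auto

lemma maximalideal_eq_snd_ideal:
  assumes P: "maximalideal P D" and j: "j \<in> J" "(\<zero>, j) \<notin> P"
  shows "\<exists>N. maximalideal N B \<and> j \<notin> N \<and> P = snd_ideal N"
proof -
  interpret P: maximalideal P D by (rule P)
  let ?N0 = "{y \<in> carrier B. (\<zero>, y \<otimes>\<^bsub>B\<^esub> j) \<in> P}"
  have "\<one>\<^bsub>B\<^esub> \<notin> ?N0" using j J.a_Hcarr by simp
  then obtain N where N: "maximalideal N B" "?N0 \<subseteq> N"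
    using B.ex_maximalideal[OF ideal_snd_colon[OF D.maximalideal_prime[OF P] j]] by blast
  have sub: "P \<subseteq> snd_ideal N"
  proof
    fix x assume x: "x \<in> P"
    obtain a b where ab: "a \<in> carrier A" "b \<in> carrier B" "x = (a, b)"
      using P.Icarr[OF x] by (rule amal_pair_cases)
    have "x \<otimes>\<^bsub>D\<^esub> (\<zero>, j) \<in> P" using P.I_r_closed x amal_zero_J_mem[OF j(1)] by blast
    then have "b \<in> ?N0" using ab by simp
    then show "x \<in> snd_ideal N" unfolding snd_ideal_def using N(2) ab P.Icarr[OF x] by auto
  qed
  have "\<one>\<^bsub>B\<^esub> \<notin> N"
    using maximalideal.I_notcarr[OF N(1)] ideal.one_imp_carrier[OF maximalideal.axioms(1)[OF N(1)]]
    by blast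
  then have eq: "snd_ideal N = P"
    using D.maximalideal_eq_of_subset[OF P snd_ideal_ideal[OF maximalideal.axioms(1)[OF N(1)]] sub]
      snd_ideal_proper by blast
  have "j \<notin> N"
  proof
    assume "j \<in> N"
    then have "(\<zero>, j) \<in> snd_ideal N" unfolding snd_ideal_def using amal_zero_J_mem[OF j(1)] by simp
    then show False using j(2) eq by simp
  qed
  then show ?thesis using N(1) eq by blast
qed

lemma amal_kernel_mem:
  assumes "a \<in> carrier A" "f a \<in> J"
  shows "(a, \<zero>\<^bsub>B\<^esub>) \<in> carrier D"
  using assms J.a_inv_closed f.hom_closed[OF assms(1)] by (simp add: amal_mem_iff B.minus_eq)

lemma amal_S_memI: "s \<in> carrier A - M \<Longrightarrow> f s \<in> amal_S A B f J M"
  unfolding amal_S_def by (force intro!: exI[of _ "\<zero>\<^bsub>B\<^esub>"])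

lemma amal_S_mult_subset:
  assumes M: "maximalideal M A"
  shows "mult_subset B (amal_S A B f J M)"
proof
  show "amal_S A B f J M \<subseteq> carrier B" unfolding amal_S_def by auto
  show "\<one>\<^bsub>B\<^esub> \<in> amal_S A B f J M"
    using amal_S_memI[of \<one> M] ideal.one_imp_carrier[OF maximalideal.axioms(1)[OF M]]
      maximalideal.I_notcarr[OF M] by auto
next
  fix x y assume "x \<in> amal_S A B f J M" "y \<in> amal_S A B f J M"
  then obtain s j t k where h: "s \<in> carrier A - M" "j \<in> J" "x = f s \<oplus>\<^bsub>B\<^esub> j"
    "t \<in> carrier A - M" "k \<in> J" "y = f t \<oplus>\<^bsub>B\<^esub> k" unfolding amal_S_def by blast
  have c: "s \<in> carrier A" "t \<in> carrier A" "j \<in> carrier B" "k \<in> carrier B" using h J.a_Hcarr by auto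
  have "x \<otimes>\<^bsub>B\<^esub> y = f (s \<otimes> t) \<oplus>\<^bsub>B\<^esub> (f s \<otimes>\<^bsub>B\<^esub> k \<oplus>\<^bsub>B\<^esub> j \<otimes>\<^bsub>B\<^esub> (f t \<oplus>\<^bsub>B\<^esub> k))"
    unfolding h(3,6) using c f.hom_closed[OF c(1)] f.hom_closed[OF c(2)] by (simp, algebra)
  moreover have "f s \<otimes>\<^bsub>B\<^esub> k \<oplus>\<^bsub>B\<^esub> j \<otimes>\<^bsub>B\<^esub> (f t \<oplus>\<^bsub>B\<^esub> k) \<in> J"
    using J.I_l_closed[OF h(5) f.hom_closed[OF c(1)]] J.I_r_closed[OF h(2)] c f.hom_closed by simp
  moreover have "s \<otimes> t \<in> carrier A - M" using A.maximalideal_complement_mult[OF M h(1,4)] .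
  ultimately show "x \<otimes>\<^bsub>B\<^esub> y \<in> amal_S A B f J M" unfolding amal_S_def by blast
qed

lemma loc_chained_of_fst_ideal:
  assumes ch: "loc_chained D (carrier D - fst_ideal M)"
  shows "loc_chained A (carrier A - M)"
  unfolding loc_chained_def
proof (intro ballI)
  fix a1 a2 assume a: "a1 \<in> carrier A" "a2 \<in> carrier A"
  obtain s x where sx: "s \<in> carrier D - fst_ideal M" "x \<in> carrier D"
      "s \<otimes>\<^bsub>D\<^esub> (a1, f a1) = x \<otimes>\<^bsub>D\<^esub> (a2, f a2) \<or> s \<otimes>\<^bsub>D\<^esub> (a2, f a2) = x \<otimes>\<^bsub>D\<^esub> (a1, f a1)"
    using ch amal_diag_mem[OF a(1)] amal_diag_mem[OF a(2)] unfolding loc_chained_def by blast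
  obtain s1 s2 where s: "s1 \<in> carrier A" "s2 \<in> carrier B" "s = (s1, s2)"
    using sx(1) by (blast elim: amal_pair_cases)
  obtain x1 x2 where x: "x1 \<in> carrier A" "x2 \<in> carrier B" "x = (x1, x2)"
    using sx(2) by (blast elim: amal_pair_cases)
  have "s1 \<in> carrier A - M" using sx(1) s unfolding fst_ideal_def by auto
  moreover have "s1 \<otimes> a1 = x1 \<otimes> a2 \<or> s1 \<otimes> a2 = x1 \<otimes> a1" using sx(3) s x by auto
  ultimately show "\<exists>s\<in>carrier A - M. \<exists>x\<in>carrier A. s \<otimes> a1 = x \<otimes> a2 \<or> s \<otimes> a2 = x \<otimes> a1"
    using x(1) by blast
qed

lemma loc_chained_fst_ideal_if_preimage_not_subset:
  assumes M: "maximalideal M A" and c: "c \<in> carrier A" "f c \<in> J" "c \<notin> M"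
    and ch: "loc_chained A (carrier A - M)"
  shows "loc_chained D (carrier D - fst_ideal M)"
  unfolding loc_chained_def
proof (intro ballI)
  fix d1 d2 assume d: "d1 \<in> carrier D" "d2 \<in> carrier D"
  obtain a1 b1 where 1: "a1 \<in> carrier A" "b1 \<in> carrier B" "d1 = (a1, b1)"
    using d(1) by (blast elim: amal_pair_cases)
  obtain a2 b2 where 2: "a2 \<in> carrier A" "b2 \<in> carrier B" "d2 = (a2, b2)"
    using d(2) by (blast elim: amal_pair_cases)
  obtain s x where sx: "s \<in> carrier A - M" "x \<in> carrier A" "s \<otimes> a1 = x \<otimes> a2 \<or> s \<otimes> a2 = x \<otimes> a1"
    using ch 1 2 unfolding loc_chained_def by blast
  have mem: "(c \<otimes> y, \<zero>\<^bsub>B\<^esub>) \<in> carrier D" if "y \<in> carrier A" for y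
    using D.m_closed[OF amal_kernel_mem[OF c(1,2)] amal_diag_mem[OF that]] c(1) that by simp
  have "c \<otimes> s \<in> carrier A - M" using A.maximalideal_complement_mult[OF M _ sx(1)] c by simp
  then have "(c \<otimes> s, \<zero>\<^bsub>B\<^esub>) \<in> carrier D - fst_ideal M" using mem sx unfolding fst_ideal_def by auto
  moreover have "(c \<otimes> x, \<zero>\<^bsub>B\<^esub>) \<in> carrier D" using mem sx by simp
  moreover have "(c \<otimes> s, \<zero>\<^bsub>B\<^esub>) \<otimes>\<^bsub>D\<^esub> d1 = (c \<otimes> x, \<zero>\<^bsub>B\<^esub>) \<otimes>\<^bsub>D\<^esub> d2 \<or>
      (c \<otimes> s, \<zero>\<^bsub>B\<^esub>) \<otimes>\<^bsub>D\<^esub> d2 = (c \<otimes> x, \<zero>\<^bsub>B\<^esub>) \<otimes>\<^bsub>D\<^esub> d1"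
    using sx 1 2 c by (auto simp: A.m_assoc)
  ultimately show "\<exists>s\<in>carrier D - fst_ideal M. \<exists>x\<in>carrier D. s \<otimes>\<^bsub>D\<^esub> d1 = x \<otimes>\<^bsub>D\<^esub> d2 \<or> s \<otimes>\<^bsub>D\<^esub> d2 = x \<otimes>\<^bsub>D\<^esub> d1"
    by blast
qed

definition J_annihilated :: "'a set \<Rightarrow> bool" where
  "J_annihilated M \<longleftrightarrow> (\<forall>j\<in>J. \<exists>u\<in>amal_S A B f J M. u \<otimes>\<^bsub>B\<^esub> j = \<zero>\<^bsub>B\<^esub>)"

text \<open>The witnesses are \<open>(s, f s)\<close> and \<open>(x, f x)\<close> times \<open>(t\<^sub>1, u\<^sub>1) (t\<^sub>2, u\<^sub>2)\<close>, where
  \<open>u\<^sub>i = f t\<^sub>i + k\<^sub>i\<close> kills \<open>j\<^sub>i\<close>.\<close>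

lemma fst_ideal_comparison_if_J_annihilated:
  assumes M: "maximalideal M A"
    and a: "a1 \<in> carrier A" "j1 \<in> J" "a2 \<in> carrier A" "j2 \<in> J"
    and sx: "s \<in> carrier A - M" "x \<in> carrier A" "s \<otimes> a1 = x \<otimes> a2"
    and u1: "t1 \<in> carrier A - M" "k1 \<in> J" "(f t1 \<oplus>\<^bsub>B\<^esub> k1) \<otimes>\<^bsub>B\<^esub> j1 = \<zero>\<^bsub>B\<^esub>"
    and u2: "t2 \<in> carrier A - M" "k2 \<in> J" "(f t2 \<oplus>\<^bsub>B\<^esub> k2) \<otimes>\<^bsub>B\<^esub> j2 = \<zero>\<^bsub>B\<^esub>"
  shows "\<exists>\<sigma>\<in>carrier D - fst_ideal M. \<exists>\<xi>\<in>carrier D.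
     \<sigma> \<otimes>\<^bsub>D\<^esub> (a1, f a1 \<oplus>\<^bsub>B\<^esub> j1) = \<xi> \<otimes>\<^bsub>D\<^esub> (a2, f a2 \<oplus>\<^bsub>B\<^esub> j2)"
proof -
  define v1 where "v1 = f t1 \<oplus>\<^bsub>B\<^esub> k1"
  define v2 where "v2 = f t2 \<oplus>\<^bsub>B\<^esub> k2"
  have c: "t1 \<in> carrier A" "t2 \<in> carrier A" "s \<in> carrier A" "j1 \<in> carrier B" "j2 \<in> carrier B"
    "k1 \<in> carrier B" "k2 \<in> carrier B" using u1 u2 sx a J.a_Hcarr by auto
  have vc: "v1 \<in> carrier B" "v2 \<in> carrier B" using c unfolding v1_def v2_def by auto
  have tau: "(t1, v1) \<in> carrier D" "(t2, v2) \<in> carrier D"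
    using amal_memI[OF c(1) u1(2)] amal_memI[OF c(2) u2(2)] unfolding v1_def v2_def .
  let ?\<sigma> = "(s, f s) \<otimes>\<^bsub>D\<^esub> ((t1, v1) \<otimes>\<^bsub>D\<^esub> (t2, v2))"
  let ?\<xi> = "(x, f x) \<otimes>\<^bsub>D\<^esub> ((t1, v1) \<otimes>\<^bsub>D\<^esub> (t2, v2))"
  have \<sigma>: "?\<sigma> \<in> carrier D" by (intro D.m_closed amal_diag_mem tau c(3))
  have \<xi>: "?\<xi> \<in> carrier D" by (intro D.m_closed amal_diag_mem tau sx(2))
  have "s \<otimes> (t1 \<otimes> t2) \<in> carrier A - M"
    using A.maximalideal_complement_mult[OF M sx(1) A.maximalideal_complement_mult[OF M u1(1) u2(1)]] .
  then have \<sigma>M: "?\<sigma> \<notin> fst_ideal M" unfolding fst_ideal_def by simp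
  have eB: "f s \<otimes>\<^bsub>B\<^esub> (v1 \<otimes>\<^bsub>B\<^esub> v2) \<otimes>\<^bsub>B\<^esub> (f a1 \<oplus>\<^bsub>B\<^esub> j1) =
      f x \<otimes>\<^bsub>B\<^esub> (v1 \<otimes>\<^bsub>B\<^esub> v2) \<otimes>\<^bsub>B\<^esub> (f a2 \<oplus>\<^bsub>B\<^esub> j2)"
  proof -
    have "f s \<otimes>\<^bsub>B\<^esub> (v1 \<otimes>\<^bsub>B\<^esub> v2) \<otimes>\<^bsub>B\<^esub> (f a1 \<oplus>\<^bsub>B\<^esub> j1) =
        (v1 \<otimes>\<^bsub>B\<^esub> v2) \<otimes>\<^bsub>B\<^esub> f (s \<otimes> a1) \<oplus>\<^bsub>B\<^esub> (f s \<otimes>\<^bsub>B\<^esub> v2) \<otimes>\<^bsub>B\<^esub> (v1 \<otimes>\<^bsub>B\<^esub> j1)"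
      using vc c a f.hom_closed[OF c(3)] f.hom_closed[OF a(1)] by (simp, algebra)
    also have "\<dots> = (v1 \<otimes>\<^bsub>B\<^esub> v2) \<otimes>\<^bsub>B\<^esub> f (x \<otimes> a2) \<oplus>\<^bsub>B\<^esub> (f x \<otimes>\<^bsub>B\<^esub> v1) \<otimes>\<^bsub>B\<^esub> (v2 \<otimes>\<^bsub>B\<^esub> j2)"
      using u1(3) u2(3) sx(3) vc c sx(2) a f.hom_closed unfolding v1_def v2_def by simp
    also have "\<dots> = f x \<otimes>\<^bsub>B\<^esub> (v1 \<otimes>\<^bsub>B\<^esub> v2) \<otimes>\<^bsub>B\<^esub> (f a2 \<oplus>\<^bsub>B\<^esub> j2)"
      using vc c a sx f.hom_closed[OF sx(2)] f.hom_closed[OF a(3)] by (simp, algebra)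
    finally show ?thesis .
  qed
  have eA: "s \<otimes> (t1 \<otimes> t2) \<otimes> a1 = x \<otimes> (t1 \<otimes> t2) \<otimes> a2"
  proof -
    have "s \<otimes> (t1 \<otimes> t2) \<otimes> a1 = (s \<otimes> a1) \<otimes> (t1 \<otimes> t2)" using c a by algebra
    also have "\<dots> = (x \<otimes> a2) \<otimes> (t1 \<otimes> t2)" using sx(3) by simp
    also have "\<dots> = x \<otimes> (t1 \<otimes> t2) \<otimes> a2" using c a sx(2) by algebra
    finally show ?thesis .
  qed
  have "?\<sigma> \<otimes>\<^bsub>D\<^esub> (a1, f a1 \<oplus>\<^bsub>B\<^esub> j1) = ?\<xi> \<otimes>\<^bsub>D\<^esub> (a2, f a2 \<oplus>\<^bsub>B\<^esub> j2)"
    using eA eB by simp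
  then show ?thesis using \<sigma> \<xi> \<sigma>M by blast
qed

lemma loc_chained_fst_ideal_if_J_annihilated:
  assumes M: "maximalideal M A" and ch: "loc_chained A (carrier A - M)" and ann: "J_annihilated M"
  shows "loc_chained D (carrier D - fst_ideal M)"
  unfolding loc_chained_def
proof (intro ballI)
  fix d1 d2 assume "d1 \<in> carrier D" "d2 \<in> carrier D"
  then obtain a1 j1 a2 j2 where d: "a1 \<in> carrier A" "j1 \<in> J" "d1 = (a1, f a1 \<oplus>\<^bsub>B\<^esub> j1)"
    "a2 \<in> carrier A" "j2 \<in> J" "d2 = (a2, f a2 \<oplus>\<^bsub>B\<^esub> j2)" by (metis amal_cases)
  obtain t1 k1 where u1: "t1 \<in> carrier A - M" "k1 \<in> J" "(f t1 \<oplus>\<^bsub>B\<^esub> k1) \<otimes>\<^bsub>B\<^esub> j1 = \<zero>\<^bsub>B\<^esub>"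
    using ann d(2) unfolding J_annihilated_def amal_S_def by blast
  obtain t2 k2 where u2: "t2 \<in> carrier A - M" "k2 \<in> J" "(f t2 \<oplus>\<^bsub>B\<^esub> k2) \<otimes>\<^bsub>B\<^esub> j2 = \<zero>\<^bsub>B\<^esub>"
    using ann d(5) unfolding J_annihilated_def amal_S_def by blast
  obtain s x where sx: "s \<in> carrier A - M" "x \<in> carrier A" "s \<otimes> a1 = x \<otimes> a2 \<or> s \<otimes> a2 = x \<otimes> a1"
    using ch d(1,4) unfolding loc_chained_def by blast
  then show "\<exists>s\<in>carrier D - fst_ideal M. \<exists>x\<in>carrier D. s \<otimes>\<^bsub>D\<^esub> d1 = x \<otimes>\<^bsub>D\<^esub> d2 \<or> s \<otimes>\<^bsub>D\<^esub> d2 = x \<otimes>\<^bsub>D\<^esub> d1"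
    using fst_ideal_comparison_if_J_annihilated[OF M d(1,2,4,5) sx(1,2) _ u1 u2]
      fst_ideal_comparison_if_J_annihilated[OF M d(4,5,1,2) sx(1,2) _ u2 u1] d(3,6)
    by blast
qed

lemma fst_ideal_annihilation_dichotomy:
  assumes ch: "loc_chained D (carrier D - fst_ideal M)" and j: "j \<in> J"
    and e: "e \<in> carrier A" "f e \<in> J"
  shows "(\<exists>u\<in>amal_S A B f J M. u \<otimes>\<^bsub>B\<^esub> j = \<zero>\<^bsub>B\<^esub>) \<or> (\<exists>t\<in>carrier A - M. t \<otimes> e = \<zero>)"
proof -
  obtain \<sigma> \<xi> where sx: "\<sigma> \<in> carrier D - fst_ideal M" "\<xi> \<in> carrier D"
      "\<sigma> \<otimes>\<^bsub>D\<^esub> (\<zero>, j) = \<xi> \<otimes>\<^bsub>D\<^esub> (e, \<zero>\<^bsub>B\<^esub>) \<or> \<sigma> \<otimes>\<^bsub>D\<^esub> (e, \<zero>\<^bsub>B\<^esub>) = \<xi> \<otimes>\<^bsub>D\<^esub> (\<zero>, j)"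
    using ch amal_zero_J_mem[OF j] amal_kernel_mem[OF e] unfolding loc_chained_def by blast
  obtain s k where s: "s \<in> carrier A" "k \<in> J" "\<sigma> = (s, f s \<oplus>\<^bsub>B\<^esub> k)"
    using sx(1) by (blast elim: amal_cases)
  obtain x1 x2 where x: "x1 \<in> carrier A" "x2 \<in> carrier B" "\<xi> = (x1, x2)"
    using sx(2) by (blast elim: amal_pair_cases)
  have "s \<in> carrier A - M" using sx(1) s unfolding fst_ideal_def by auto
  moreover have "f s \<oplus>\<^bsub>B\<^esub> k \<in> amal_S A B f J M" using calculation s unfolding amal_S_def by blast
  moreover have "(f s \<oplus>\<^bsub>B\<^esub> k) \<otimes>\<^bsub>B\<^esub> j = \<zero>\<^bsub>B\<^esub> \<or> s \<otimes> e = \<zero>" using sx(3) s x by auto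
  ultimately show ?thesis by blast
qed

lemma J_annihilated_iff_loc_ext:
  assumes "maximalideal M A"
  shows "J_annihilated M \<longleftrightarrow>
    loc_ext B (amal_S A B f J M) J = {\<zero>\<^bsub>localization B (amal_S A B f J M)\<^esub>}"
  unfolding J_annihilated_def
  using mult_subset.loc_ext_eq_zero_iff[OF amal_S_mult_subset[OF assms] J.a_subset] by simp

lemma J_annihilated_if_preimage_not_torsion:
  assumes M: "maximalideal M A" and ch: "loc_chained D (carrier D - fst_ideal M)"
    and nz: "loc_ext A (carrier A - M) {a \<in> carrier A. f a \<in> J} \<noteq> {\<zero>\<^bsub>loc_at A M\<^esub>}"
  shows "J_annihilated M"
proof -
  interpret max_localization A M by (rule max_localization.intro[OF A.is_cring max_localization_axioms.intro[OF M]])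
  obtain a where a: "a \<in> carrier A" "f a \<in> J" "\<forall>t\<in>carrier A - M. t \<otimes> a \<noteq> \<zero>"
    using nz loc_ext_eq_zero_iff[of "{a \<in> carrier A. f a \<in> J}"] by auto
  show ?thesis
    unfolding J_annihilated_def using fst_ideal_annihilation_dichotomy[OF ch _ a(1,2)] a(3) by blast
qed

lemma J_element_annihilated_if_fraction:
  assumes M: "maximalideal M A" and ch: "loc_chained D (carrier D - fst_ideal M)" and j: "j \<in> J"
    and a: "a \<in> carrier A" "s \<in> carrier A - M" and u: "u \<in> amal_S A B f J M"
    and e: "u \<otimes>\<^bsub>B\<^esub> (j \<otimes>\<^bsub>B\<^esub> f s \<ominus>\<^bsub>B\<^esub> f a) = \<zero>\<^bsub>B\<^esub>"
  shows "\<exists>w\<in>amal_S A B f J M. w \<otimes>\<^bsub>B\<^esub> j = \<zero>\<^bsub>B\<^esub>"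
proof -
  interpret S: mult_subset B "amal_S A B f J M" by (rule amal_S_mult_subset[OF M])
  obtain t k where tk: "t \<in> carrier A - M" "k \<in> J" "u = f t \<oplus>\<^bsub>B\<^esub> k"
    using u unfolding amal_S_def by blast
  have c: "t \<in> carrier A" "k \<in> carrier B" "j \<in> carrier B" "s \<in> carrier A" using tk J.a_Hcarr j a by auto
  have fc: "f t \<in> carrier B" "f a \<in> carrier B" "f s \<in> carrier B" using c a by auto
  have uc: "u \<in> carrier B" using tk c fc by simp
  have eq: "u \<otimes>\<^bsub>B\<^esub> f a = u \<otimes>\<^bsub>B\<^esub> j \<otimes>\<^bsub>B\<^esub> f s"
  proof -
    have "u \<otimes>\<^bsub>B\<^esub> j \<otimes>\<^bsub>B\<^esub> f s = u \<otimes>\<^bsub>B\<^esub> f a \<oplus>\<^bsub>B\<^esub> u \<otimes>\<^bsub>B\<^esub> (j \<otimes>\<^bsub>B\<^esub> f s \<ominus>\<^bsub>B\<^esub> f a)"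
      using uc c fc by algebra
    then show ?thesis using e uc fc by simp
  qed
  have "f (t \<otimes> a) = u \<otimes>\<^bsub>B\<^esub> f a \<ominus>\<^bsub>B\<^esub> k \<otimes>\<^bsub>B\<^esub> f a"
    unfolding tk(3) using c a fc by (simp, algebra)
  also have "\<dots> = u \<otimes>\<^bsub>B\<^esub> j \<otimes>\<^bsub>B\<^esub> f s \<ominus>\<^bsub>B\<^esub> k \<otimes>\<^bsub>B\<^esub> f a" using eq by simp
  also have "\<dots> \<in> J"
    using J.a_closed[OF J.I_r_closed[OF J.I_l_closed[OF j uc] fc(3)]
        J.a_inv_closed[OF J.I_r_closed[OF tk(2) fc(2)]]] by (simp add: B.minus_eq)
  finally have fta: "f (t \<otimes> a) \<in> J" .
  have "t \<otimes> a \<in> carrier A" using c a by simp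
  from fst_ideal_annihilation_dichotomy[OF ch j this fta] show ?thesis
  proof (elim disjE bexE)
    fix r assume r: "r \<in> carrier A - M" "r \<otimes> (t \<otimes> a) = \<zero>"
    have rc: "r \<in> carrier A" using r by simp
    let ?w = "f (r \<otimes> t) \<otimes>\<^bsub>B\<^esub> u \<otimes>\<^bsub>B\<^esub> f s"
    have "?w \<in> amal_S A B f J M"
      using S.S_mult[OF S.S_mult[OF amal_S_memI u] amal_S_memI[OF a(2)]]
        A.maximalideal_complement_mult[OF M r(1) tk(1)] by blast
    moreover have "?w \<otimes>\<^bsub>B\<^esub> j = f (r \<otimes> t) \<otimes>\<^bsub>B\<^esub> (u \<otimes>\<^bsub>B\<^esub> j \<otimes>\<^bsub>B\<^esub> f s)"
      using rc c fc uc f.hom_closed[OF rc] by (simp, algebra)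
    moreover have "f (r \<otimes> t) \<otimes>\<^bsub>B\<^esub> (u \<otimes>\<^bsub>B\<^esub> f a) = u \<otimes>\<^bsub>B\<^esub> f (r \<otimes> (t \<otimes> a))"
      using rc c a fc uc f.hom_closed[OF rc] by (simp, algebra)
    ultimately show ?thesis using eq r(2) uc by auto
  qed blast
qed

lemma J_annihilated_if_surjective:
  assumes M: "maximalideal M A" and ch: "loc_chained D (carrier D - fst_ideal M)"
    and surj: "loc_map B (amal_S A B f J M) f ` carrier (loc_at A M)
      = carrier (localization B (amal_S A B f J M))"
  shows "J_annihilated M"
  unfolding J_annihilated_def
proof
  interpret S: mult_subset B "amal_S A B f J M" by (rule amal_S_mult_subset[OF M])
  interpret max_localization A M
    by (rule max_localization.intro[OF A.is_cring max_localization_axioms.intro[OF M]])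
  fix j assume j: "j \<in> J"
  have jc: "j \<in> carrier B" using J.a_Hcarr[OF j] .
  obtain U where U: "U \<in> carrier (loc_at A M)"
    "loc_can B (amal_S A B f J M) j = loc_map B (amal_S A B f J M) f U"
    using surj S.can.hom_closed[OF jc] by (metis imageE)
  obtain a s where as: "a \<in> carrier A" "s \<in> carrier A - M" "U = fr a s"
    using U(1) by (rule localization_cases)
  let ?a = "fst (loc_rep U)" and ?s = "snd (loc_rep U)"
  have as': "?a \<in> carrier A" "?s \<in> carrier A - M" using loc_rep_props(1,2)[OF as(1,2)] as(3) by auto
  have "loc_frac B (amal_S A B f J M) j \<one>\<^bsub>B\<^esub> = loc_frac B (amal_S A B f J M) (f ?a) (f ?s)"
    using U(2) S.loc_can_eq unfolding loc_map_def by simp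
  then obtain u where u: "u \<in> amal_S A B f J M"
      "u \<otimes>\<^bsub>B\<^esub> (j \<otimes>\<^bsub>B\<^esub> f ?s \<ominus>\<^bsub>B\<^esub> f ?a \<otimes>\<^bsub>B\<^esub> \<one>\<^bsub>B\<^esub>) = \<zero>\<^bsub>B\<^esub>"
    using S.loc_frac_eq_iff[OF jc S.one_S f.hom_closed[OF as'(1)] amal_S_memI[OF as'(2)]] by blast
  then show "\<exists>u\<in>amal_S A B f J M. u \<otimes>\<^bsub>B\<^esub> j = \<zero>\<^bsub>B\<^esub>"
    using J_element_annihilated_if_fraction[OF M ch j as'] as'(1) by simp
qed

lemma loc_chained_fst_ideal_iff:
  assumes M: "maximalideal M A"
    and hyp: "{a \<in> carrier A. f a \<in> J} \<subseteq> M \<Longrightarrow>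
       (loc_map B (amal_S A B f J M) f ` carrier (loc_at A M)
                  = carrier (localization B (amal_S A B f J M)))
       \<or> loc_ext A (carrier A - M) {a \<in> carrier A. f a \<in> J} \<noteq> {\<zero>\<^bsub>loc_at A M\<^esub>}"
  shows "loc_chained D (carrier D - fst_ideal M) \<longleftrightarrow> loc_chained A (carrier A - M) \<and>
    ({a \<in> carrier A. f a \<in> J} \<subseteq> M \<longrightarrow>
      loc_ext B (amal_S A B f J M) J = {\<zero>\<^bsub>localization B (amal_S A B f J M)\<^esub>})"
proof (cases "{a \<in> carrier A. f a \<in> J} \<subseteq> M")
  case True
  have "loc_chained D (carrier D - fst_ideal M) \<Longrightarrow> J_annihilated M"
    using hyp[OF True] J_annihilated_if_surjective[OF M] J_annihilated_if_preimage_not_torsion[OF M]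
    by blast
  then show ?thesis
    using True loc_chained_of_fst_ideal loc_chained_fst_ideal_if_J_annihilated[OF M]
      J_annihilated_iff_loc_ext[OF M] by blast
next
  case False
  then obtain c where "c \<in> carrier A" "f c \<in> J" "c \<notin> M" by blast
  then show ?thesis
    using False loc_chained_of_fst_ideal loc_chained_fst_ideal_if_preimage_not_subset[OF M] by blast
qed

lemma loc_chained_of_snd_ideal:
  assumes N: "maximalideal N B" and j: "j \<in> J" "j \<notin> N"
    and ch: "loc_chained D (carrier D - snd_ideal N)"
  shows "loc_chained B (carrier B - N)"
  unfolding loc_chained_def
proof (intro ballI)
  fix y z assume yz: "y \<in> carrier B" "z \<in> carrier B"
  have jc: "j \<in> carrier B" using J.a_Hcarr[OF j(1)] .
  obtain \<sigma> \<xi> where sx: "\<sigma> \<in> carrier D - snd_ideal N" "\<xi> \<in> carrier D"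
    "\<sigma> \<otimes>\<^bsub>D\<^esub> (\<zero>, y \<otimes>\<^bsub>B\<^esub> j) = \<xi> \<otimes>\<^bsub>D\<^esub> (\<zero>, z \<otimes>\<^bsub>B\<^esub> j) \<or>
     \<sigma> \<otimes>\<^bsub>D\<^esub> (\<zero>, z \<otimes>\<^bsub>B\<^esub> j) = \<xi> \<otimes>\<^bsub>D\<^esub> (\<zero>, y \<otimes>\<^bsub>B\<^esub> j)"
    using ch amal_zero_J_mem[OF J.I_l_closed[OF j(1)]] yz unfolding loc_chained_def by blast
  obtain s1 s2 where s: "s1 \<in> carrier A" "s2 \<in> carrier B" "\<sigma> = (s1, s2)"
    using sx(1) by (blast elim: amal_pair_cases)
  obtain x1 x2 where x: "x1 \<in> carrier A" "x2 \<in> carrier B" "\<xi> = (x1, x2)"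
    using sx(2) by (blast elim: amal_pair_cases)
  have "s2 \<in> carrier B - N" using sx(1) s unfolding snd_ideal_def by auto
  then have "s2 \<otimes>\<^bsub>B\<^esub> j \<in> carrier B - N"
    using B.maximalideal_complement_mult[OF N] j jc by simp
  moreover have "x2 \<otimes>\<^bsub>B\<^esub> j \<in> carrier B" using x jc by simp
  moreover have "(s2 \<otimes>\<^bsub>B\<^esub> j) \<otimes>\<^bsub>B\<^esub> p = (x2 \<otimes>\<^bsub>B\<^esub> j) \<otimes>\<^bsub>B\<^esub> q"
    if "s2 \<otimes>\<^bsub>B\<^esub> (p \<otimes>\<^bsub>B\<^esub> j) = x2 \<otimes>\<^bsub>B\<^esub> (q \<otimes>\<^bsub>B\<^esub> j)" "p \<in> carrier B" "q \<in> carrier B" for p q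
    using that s(2) x(2) jc by (simp add: B.m_assoc B.m_comm[of j])
  ultimately show "\<exists>s\<in>carrier B - N. \<exists>x\<in>carrier B. s \<otimes>\<^bsub>B\<^esub> y = x \<otimes>\<^bsub>B\<^esub> z \<or> s \<otimes>\<^bsub>B\<^esub> z = x \<otimes>\<^bsub>B\<^esub> y"
    using sx(3) s x yz by auto
qed

lemma loc_chained_snd_ideal:
  assumes N: "maximalideal N B" and j: "j \<in> J" "j \<notin> N"
    and ch: "loc_chained B (carrier B - N)"
  shows "loc_chained D (carrier D - snd_ideal N)"
  unfolding loc_chained_def
proof (intro ballI)
  fix d1 d2 assume d: "d1 \<in> carrier D" "d2 \<in> carrier D"
  obtain a1 b1 where 1: "a1 \<in> carrier A" "b1 \<in> carrier B" "d1 = (a1, b1)"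
    using d(1) by (blast elim: amal_pair_cases)
  obtain a2 b2 where 2: "a2 \<in> carrier A" "b2 \<in> carrier B" "d2 = (a2, b2)"
    using d(2) by (blast elim: amal_pair_cases)
  obtain s x where sx: "s \<in> carrier B - N" "x \<in> carrier B" "s \<otimes>\<^bsub>B\<^esub> b1 = x \<otimes>\<^bsub>B\<^esub> b2 \<or> s \<otimes>\<^bsub>B\<^esub> b2 = x \<otimes>\<^bsub>B\<^esub> b1"
    using ch 1 2 unfolding loc_chained_def by blast
  have jc: "j \<in> carrier B" using J.a_Hcarr[OF j(1)] .
  have "(\<zero>, j \<otimes>\<^bsub>B\<^esub> s) \<in> carrier D - snd_ideal N"
    using amal_zero_J_mem[OF J.I_r_closed[OF j(1)]] B.maximalideal_complement_mult[OF N _ sx(1)] j jc sx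
    unfolding snd_ideal_def by auto
  moreover have "(\<zero>, j \<otimes>\<^bsub>B\<^esub> x) \<in> carrier D" using amal_zero_J_mem[OF J.I_r_closed[OF j(1) sx(2)]] .
  moreover have "(\<zero>, j \<otimes>\<^bsub>B\<^esub> s) \<otimes>\<^bsub>D\<^esub> d1 = (\<zero>, j \<otimes>\<^bsub>B\<^esub> x) \<otimes>\<^bsub>D\<^esub> d2 \<or>
      (\<zero>, j \<otimes>\<^bsub>B\<^esub> s) \<otimes>\<^bsub>D\<^esub> d2 = (\<zero>, j \<otimes>\<^bsub>B\<^esub> x) \<otimes>\<^bsub>D\<^esub> d1"
    using sx 1 2 jc by (auto simp: B.m_assoc)
  ultimately show "\<exists>s\<in>carrier D - snd_ideal N. \<exists>x\<in>carrier D. s \<otimes>\<^bsub>D\<^esub> d1 = x \<otimes>\<^bsub>D\<^esub> d2 \<or> s \<otimes>\<^bsub>D\<^esub> d2 = x \<otimes>\<^bsub>D\<^esub> d1"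
    by blast
qed

lemma loc_chained_snd_ideal_iff:
  assumes N: "maximalideal N B" and J: "\<not> J \<subseteq> N"
  shows "loc_chained D (carrier D - snd_ideal N) \<longleftrightarrow>
    (\<forall>I1 I2. ideal I1 (loc_at B N) \<and> ideal I2 (loc_at B N) \<longrightarrow> I1 \<subseteq> I2 \<or> I2 \<subseteq> I1)"
proof -
  interpret max_localization B N
    by (rule max_localization.intro[OF B.is_cring max_localization_axioms.intro[OF N]])
  obtain j where j: "j \<in> J" "j \<notin> N" using J by blast
  then have "loc_chained D (carrier D - snd_ideal N) \<longleftrightarrow> loc_chained B (carrier B - N)"
    using loc_chained_of_snd_ideal[OF N j] loc_chained_snd_ideal[OF N j] by blast
  then show ?thesis using loc_chained_iff_ideals_chain by simp
qed

lemma arithmetical_amalgamation_iff: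
  "arithmetical D \<longleftrightarrow> (\<forall>M. maximalideal M A \<longrightarrow> loc_chained D (carrier D - fst_ideal M)) \<and>
     (\<forall>N. maximalideal N B \<and> \<not> J \<subseteq> N \<longrightarrow> loc_chained D (carrier D - snd_ideal N))"
  unfolding arithmetical_iff_loc_chained[OF amal_cring]
proof (intro iffI conjI allI impI)
  fix M assume "\<forall>P. maximalideal P D \<longrightarrow> loc_chained D (carrier D - P)" "maximalideal M A"
  then show "loc_chained D (carrier D - fst_ideal M)" using fst_ideal_maximal by blast
next
  fix N assume "\<forall>P. maximalideal P D \<longrightarrow> loc_chained D (carrier D - P)"
    and N: "maximalideal N B \<and> \<not> J \<subseteq> N"
  then show "loc_chained D (carrier D - snd_ideal N)" using snd_ideal_maximal by blast
next
  fix P assume ch: "(\<forall>M. maximalideal M A \<longrightarrow> loc_chained D (carrier D - fst_ideal M)) \<and>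
     (\<forall>N. maximalideal N B \<and> \<not> J \<subseteq> N \<longrightarrow> loc_chained D (carrier D - snd_ideal N))"
    and P: "maximalideal P D"
  show "loc_chained D (carrier D - P)"
  proof (cases "\<forall>j\<in>J. (\<zero>, j) \<in> P")
    case True
    then show ?thesis using maximalideal_eq_fst_ideal[OF P] ch by blast
  next
    case False
    then obtain j where "j \<in> J" "(\<zero>, j) \<notin> P" by blast
    then show ?thesis using maximalideal_eq_snd_ideal[OF P] ch by blast
  qed
qed

end

theorem proposition4p10:
  fixes A :: "('a, 'm) ring_scheme" and B :: "('b, 'n) ring_scheme"
    and f :: "'a \<Rightarrow> 'b" and J :: "'b set"
  assumes "cring A" and "cring B"
    and "f \<in> ring_hom A B"
    and "ideal J B"
    and hyp: "\<And>M. maximalideal M A \<Longrightarrow> {a \<in> carrier A. f a \<in> J} \<subseteq> M \<Longrightarrow>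
       (loc_map B (amal_S A B f J M) f ` carrier (loc_at A M)
                  = carrier (localization B (amal_S A B f J M)))
       \<or> loc_ext A (carrier A - M) {a \<in> carrier A. f a \<in> J} \<noteq> {\<zero>\<^bsub>loc_at A M\<^esub>}"
  shows "arithmetical (amalgamation A B f J) \<longleftrightarrow>
           (arithmetical A
            \<and> (\<forall>M. maximalideal M A \<and> {a \<in> carrier A. f a \<in> J} \<subseteq> M \<longrightarrow>
                 loc_ext B (amal_S A B f J M) J = {\<zero>\<^bsub>localization B (amal_S A B f J M)\<^esub>})
            \<and> (\<forall>N. maximalideal N B \<and> \<not> J \<subseteq> N \<longrightarrow>
                 (\<forall>I1 I2. ideal I1 (loc_at B N) \<and> ideal I2 (loc_at B N) \<longrightarrow>
                      I1 \<subseteq> I2 \<or> I2 \<subseteq> I1)))"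
proof -
  interpret amalgamation_setup A B f J
    using assms(1-4) by (simp add: amalgamation_setup_def amalgamation_setup_axioms_def)
  show ?thesis
    unfolding arithmetical_amalgamation_iff arithmetical_iff_loc_chained[OF assms(1)]
    using loc_chained_fst_ideal_iff[OF _ hyp] loc_chained_snd_ideal_iff by auto
qed

end
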